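(* Let $a$ be a weak composition of length $n$ that is not identically zero. Then $\lim_{m\to\infty}\mathcal{G}^{(1)}_{0^m a}=\tilde{L}_{\mathtt{flat}(a)}(x_1,x_2,\dots)$, in the sense that for every monomial $x^c$ in finitely many variables, the coefficient of $x^c$ in $\mathcal{G}^{(1)}_{0^m a}(x_1,\dots,x_{m+n})$ equals its coefficient in $\tilde{L}_{\mathtt{flat}(a)}$ for all sufficiently large $m$.
   Context: $0^m a$ denotes the weak composition obtained by prepending $m$ zeros to $a$. Glide polynomials: a weak komposition is a weak composition whose positive entries are colored black or red, $\mathrm{ex}(b)$ = number of red entries, $\mathtt{flat}(a)$ = sequence of nonzero entries of $a$. For $a$ of length $N$ with nonzero entries exactly at positions $n_1<\dots<n_\ell$, a weak komposition $b$ of length $N$ is a glide of $a$ if there exist $0=i_0<\dots<i_\ell$ with $i_j\le n_j$, $b_k=0$ for $k>i_\ell$, and for each $j$: $b_{i_{j-1}+1}+\dots+b_{i_j}=\mathtt{flat}(a)_j+\#\{\text{red entries among } b_{i_{j-1}+1},\dots,b_{i_j}\}$ and the first nonzero entry among them is black. $\mathcal{G}^{(\beta)}_a(x_1,\dots,x_N)=\sum_b\beta^{\mathrm{ex}(b)}x^b$ over glides $b$ of $a$; $\mathcal{G}^{(1)}$ is the specialization $\beta=1$. Multi-fundamental quasisymmetric functions (Lam–Pylyavskyy): for nonempty finite $S,S'\subset\mathbb{Z}_{>0}$ write $S<S'$ if $\max S<\min S'$ and $S\le S'$ if $\max S\le\min S'$. For a composition $\alpha$ with $|\alpha|=N$,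 let $\tilde{A}_\alpha$ be the set of sequences $\sigma=(S_1,\dots,S_N)$ of nonempty finite subsets of $\mathbb{Z}_{>0}$ such that $S_i<S_{i+1}$ if $i=\alpha_1+\dots+\alpha_k$ for some $k$, and $S_i\le S_{i+1}$ otherwise. $\mathrm{wt}(\sigma)_k$ is the number of indices $i$ with $k\in S_i$, and $\tilde{L}_\alpha=\sum_{\sigma\in\tilde A_\alpha}x^{\mathrm{wt}(\sigma)}$, a formal power series in $x_1,x_2,\dots$. *)

theory Defs
  imports Main
begin

text \<open>Weak compositions are lists of naturals; entry k (1-based) is the exponent of x_k.
  Weak kompositions are lists of pairs (value, red?); zero entries must be uncoloured (False).\<close>

definition flat :: "nat list \<Rightarrow> nat list" where
  "flat a = filter (\<lambda>x. x \<noteq> 0) a"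

definition nzpos :: "nat list \<Rightarrow> nat list" where
  "nzpos a = filter (\<lambda>k. a ! (k - 1) \<noteq> 0) [1..<length a + 1]"

definition bval :: "(nat \<times> bool) list \<Rightarrow> nat \<Rightarrow> nat" where
  "bval b k = fst (b ! (k - 1))"
definition bred :: "(nat \<times> bool) list \<Rightarrow> nat \<Rightarrow> bool" where
  "bred b k = snd (b ! (k - 1))"

definition is_wkomp :: "(nat \<times> bool) list \<Rightarrow> bool" where
  "is_wkomp b \<longleftrightarrow> (\<forall>k<length b. fst (b ! k) = 0 \<longrightarrow> \<not> snd (b ! k))"

definition ex :: "(nat \<times> bool) list \<Rightarrow> nat" where
  "ex b = card {k. 1 \<le> k \<and> k \<le> length b \<and> bval b k \<noteq> 0 \<and> bred b k}"

definition is_glide :: "nat list \<Rightarrow> (nat \<times> bool) list \<Rightarrow> bool" where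
  "is_glide a b \<longleftrightarrow> is_wkomp b \<and> length b = length a \<and>
    (let l = length (flat a) in
     \<exists>i :: nat \<Rightarrow> nat. i 0 = 0 \<and> (\<forall>j<l. i j < i (Suc j)) \<and>
       (\<forall>j\<in>{1..l}. i j \<le> nzpos a ! (j - 1)) \<and>
       (\<forall>k. i l < k \<and> k \<le> length b \<longrightarrow> bval b k = 0) \<and>
       (\<forall>j\<in>{1..l}.
          (\<Sum>k\<in>{i (j - 1)<..i j}. bval b k)
            = flat a ! (j - 1) + card {k\<in>{i (j - 1)<..i j}. bval b k \<noteq> 0 \<and> bred b k} \<and>
          (\<forall>k\<in>{i (j - 1)<..i j}. bval b k \<noteq> 0 \<and> (\<forall>k'\<in>{i (j - 1)<..<k}. bval b k' = 0)
               \<longrightarrow> \<not> bred b k)))"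

text \<open>Exponent vector of x^b (variables x_1, x_2, ...; index 0 unused).\<close>
definition mono_of :: "(nat \<times> bool) list \<Rightarrow> nat \<Rightarrow> nat" where
  "mono_of b k = (if 1 \<le> k \<and> k \<le> length b then bval b k else 0)"

text \<open>Coefficient of x^c in the glide polynomial G^(beta)_a(x_1,...,x_N), N = length a.\<close>
definition glide_coeff :: "'r::comm_semiring_1 \<Rightarrow> nat list \<Rightarrow> (nat \<Rightarrow> nat) \<Rightarrow> 'r" where
  "glide_coeff \<beta> a c = (\<Sum>b\<in>{b. is_glide a b \<and> mono_of b = c}. \<beta> ^ ex b)"

text \<open>Multi-fundamental quasisymmetric function \<tilde>L_alpha: sequences of nonempty finite
  subsets of positive integers.\<close>
definition Atilde :: "nat list \<Rightarrow> nat set list set" where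
  "Atilde \<alpha> = {\<sigma>. length \<sigma> = sum_list \<alpha> \<and>
     (\<forall>S\<in>set \<sigma>. S \<noteq> {} \<and> finite S \<and> 0 \<notin> S) \<and>
     (\<forall>i. 1 \<le> i \<and> i < length \<sigma> \<longrightarrow>
        (if (\<exists>k. 1 \<le> k \<and> k \<le> length \<alpha> \<and> i = sum_list (take k \<alpha>))
         then Max (\<sigma> ! (i - 1)) < Min (\<sigma> ! i)
         else Max (\<sigma> ! (i - 1)) \<le> Min (\<sigma> ! i)))}"

definition wt :: "nat set list \<Rightarrow> nat \<Rightarrow> nat" where
  "wt \<sigma> k = card {i. i < length \<sigma> \<and> k \<in> \<sigma> ! i}"

definition Ltilde_coeff :: "nat list \<Rightarrow> (nat \<Rightarrow> nat) \<Rightarrow> nat" where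
  "Ltilde_coeff \<alpha> c = card {\<sigma>\<in>Atilde \<alpha>. wt \<sigma> = c}"

end

theory Submission
  imports Defs
begin

text \<open>Once \<open>m\<close> exceeds every variable occurring in \<open>x\<^sup>c\<close>, the bounds \<open>i\<^sub>j \<le> n\<^sub>j\<close> in the
  definition of a glide of \<open>0\<^sup>m a\<close> are automatic, so a glide with monomial \<open>x\<^sup>c\<close> is determined by
  its set \<open>R\<close> of red positions, subject only to the existence of a cutting of the positions into
  consecutive blocks, one for each part of \<open>flat a\<close>.  These sets and the set sequences of weight \<open>c\<close>
  in \<open>\<tilde>A\<^bsub>flat a\<^esub>\<close> are counted by the same recursion in the least variable \<open>k\<close> of \<open>x\<^sup>c\<close>.
  If \<open>c\<^sub>k \<ge> 2\<close>, then \<open>S\<^sub>1 = {k}\<close>, resp. \<open>k\<close> is the black leader of the first block, and one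
  removes a copy of \<open>x\<^sub>k\<close> together with one cell of the first part.  If \<open>c\<^sub>k = 1\<close>, then either
  \<open>S\<^sub>1 = {k}\<close> and the whole cell is removed, or \<open>k\<close> is adjoined to the first set of a sequence of
  weight \<open>c - e\<^sub>k\<close>; on the glide side the two cases are that the next variable \<open>k'\<close> is black or red.\<close>

section \<open>Set sequences of a given weight\<close>

definition composition :: "nat list \<Rightarrow> bool" where
  "composition \<alpha> \<longleftrightarrow> (\<forall>x\<in>set \<alpha>. 0 < x)"

fun dec_head :: "nat list \<Rightarrow> nat list" where
  "dec_head [] = []"
| "dec_head (a # r) = (if a \<le> 1 then r else (a - 1) # r)"

lemma composition_dec_head: "composition \<alpha> \<Longrightarrow> composition (dec_head \<alpha>)"
  by (cases \<alpha>) (auto simp: composition_def)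

lemma composition_flat: "composition (flat a)"
  by (simp add: composition_def flat_def)

definition part_end :: "nat list \<Rightarrow> nat \<Rightarrow> bool" where
  "part_end \<alpha> i \<longleftrightarrow> (\<exists>k. 1 \<le> k \<and> k \<le> length \<alpha> \<and> i = sum_list (take k \<alpha>))"

lemma part_end_one: "composition (a # r) \<Longrightarrow> part_end (a # r) 1 \<longleftrightarrow> a = 1"
proof
  assume p: "composition (a # r)" and "part_end (a # r) 1"
  then obtain k where k: "1 \<le> k" "1 = sum_list (take k (a # r))"
    unfolding part_end_def by blast
  then obtain k' where "k = Suc k'" by (cases k) auto
  with k have "1 = a + sum_list (take k' r)" by simp
  moreover have "0 < a" using p by (simp add: composition_def)
  ultimately show "a = 1" by linarith
next
  assume "a = 1"
  then show "part_end (a # r) 1" unfolding part_end_def by (intro exI[of _ 1]) auto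
qed

lemma part_end_Suc:
  assumes p: "composition (a # r)" and i: "1 \<le> i"
  shows "part_end (a # r) (Suc i) \<longleftrightarrow> part_end (dec_head (a # r)) i"
proof (cases "a = 1")
  case True
  show ?thesis
  proof
    assume "part_end (a # r) (Suc i)"
    then obtain k where k: "1 \<le> k" "k \<le> length (a # r)" "Suc i = sum_list (take k (a # r))"
      unfolding part_end_def by blast
    then obtain k' where kk: "k = Suc k'" by (cases k) auto
    with k True i have "1 \<le> k'" by (cases k') auto
    with k kk True show "part_end (dec_head (a # r)) i"
      unfolding part_end_def by (intro exI[of _ k']) auto
  next
    assume "part_end (dec_head (a # r)) i"
    then obtain k where "1 \<le> k" "k \<le> length r" "i = sum_list (take k r)"
      unfolding part_end_def using True by auto
    then show "part_end (a # r) (Suc i)"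
      unfolding part_end_def using True by (intro exI[of _ "Suc k"]) auto
  qed
next
  case False
  with p have a: "1 < a" by (simp add: composition_def)
  show ?thesis
  proof
    assume "part_end (a # r) (Suc i)"
    then obtain k where k: "1 \<le> k" "k \<le> length (a # r)" "Suc i = sum_list (take k (a # r))"
      unfolding part_end_def by blast
    then obtain k' where "k = Suc k'" by (cases k) auto
    with k a show "part_end (dec_head (a # r)) i"
      unfolding part_end_def by (intro exI[of _ k]) auto
  next
    assume "part_end (dec_head (a # r)) i"
    then obtain k where k: "1 \<le> k" "k \<le> length ((a - 1) # r)" "i = sum_list (take k ((a - 1) # r))"
      unfolding part_end_def using a by auto
    then obtain k' where "k = Suc k'" by (cases k) auto
    with k a show "part_end (a # r) (Suc i)"
      unfolding part_end_def by (intro exI[of _ k]) auto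
  qed
qed

definition pos_finite :: "nat set \<Rightarrow> bool" where
  "pos_finite S \<longleftrightarrow> S \<noteq> {} \<and> finite S \<and> 0 \<notin> S"

definition set_chain :: "nat list \<Rightarrow> nat set list \<Rightarrow> bool" where
  "set_chain \<alpha> \<sigma> \<longleftrightarrow> (\<forall>i. 1 \<le> i \<and> i < length \<sigma> \<longrightarrow>
     (if part_end \<alpha> i then Max (\<sigma> ! (i - 1)) < Min (\<sigma> ! i) else Max (\<sigma> ! (i - 1)) \<le> Min (\<sigma> ! i)))"

lemma Atilde_eq:
  "Atilde \<alpha> = {\<sigma>. length \<sigma> = sum_list \<alpha> \<and> (\<forall>S\<in>set \<sigma>. pos_finite S) \<and> set_chain \<alpha> \<sigma>}"
  unfolding Atilde_def set_chain_def part_end_def pos_finite_def by auto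

lemma Atilde_Nil: "Atilde [] = {[]}"
  unfolding Atilde_eq set_chain_def by auto

lemma set_chain_Cons:
  assumes p: "composition (a # r)"
  shows "set_chain (a # r) (S # \<sigma>) \<longleftrightarrow>
    (\<sigma> \<noteq> [] \<longrightarrow> (if a = 1 then Max S < Min (hd \<sigma>) else Max S \<le> Min (hd \<sigma>))) \<and>
    set_chain (dec_head (a # r)) \<sigma>" (is "?L \<longleftrightarrow> ?A \<and> ?B")
proof
  assume L: ?L
  have ?A
  proof
    assume "\<sigma> \<noteq> []"
    with L[unfolded set_chain_def, rule_format, of 1] part_end_one[OF p]
    show "if a = 1 then Max S < Min (hd \<sigma>) else Max S \<le> Min (hd \<sigma>)"
      by (auto simp: hd_conv_nth split: if_splits)
  qed
  moreover have ?B
    unfolding set_chain_def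
  proof (intro allI impI)
    fix i assume i: "1 \<le> i \<and> i < length \<sigma>"
    with L[unfolded set_chain_def, rule_format, of "Suc i"] part_end_Suc[OF p, of i]
    show "if part_end (dec_head (a # r)) i then Max (\<sigma> ! (i - 1)) < Min (\<sigma> ! i)
        else Max (\<sigma> ! (i - 1)) \<le> Min (\<sigma> ! i)"
      by (cases i) auto
  qed
  ultimately show "?A \<and> ?B" ..
next
  assume AB: "?A \<and> ?B"
  show ?L
    unfolding set_chain_def
  proof (intro allI impI)
    fix i assume i: "1 \<le> i \<and> i < length (S # \<sigma>)"
    show "if part_end (a # r) i then Max ((S # \<sigma>) ! (i - 1)) < Min ((S # \<sigma>) ! i)
        else Max ((S # \<sigma>) ! (i - 1)) \<le> Min ((S # \<sigma>) ! i)"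
    proof (cases "i = 1")
      case True
      with i AB part_end_one[OF p] show ?thesis by (cases \<sigma>) (auto split: if_splits)
    next
      case False
      with i obtain i' where "i = Suc i'" "1 \<le> i'" "i' < length \<sigma>" by (cases i) auto
      with AB part_end_Suc[OF p, of i'] show ?thesis by (cases i') (auto simp: set_chain_def)
    qed
  qed
qed

lemma Atilde_Cons:
  assumes p: "composition (a # r)"
  shows "S # \<sigma> \<in> Atilde (a # r) \<longleftrightarrow> pos_finite S \<and> \<sigma> \<in> Atilde (dec_head (a # r)) \<and>
     (\<sigma> \<noteq> [] \<longrightarrow> (if a = 1 then Max S < Min (hd \<sigma>) else Max S \<le> Min (hd \<sigma>)))"
proof -
  have "length (S # \<sigma>) = sum_list (a # r) \<longleftrightarrow> length \<sigma> = sum_list (dec_head (a # r))"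
    using p by (auto simp: composition_def)
  with set_chain_Cons[OF p] show ?thesis
    unfolding Atilde_eq by auto
qed

lemma Atilde_pos_finite: "\<sigma> \<in> Atilde \<alpha> \<Longrightarrow> S \<in> set \<sigma> \<Longrightarrow> pos_finite S"
  unfolding Atilde_eq by auto

lemma Atilde_Max_le_Min: "\<sigma> \<in> Atilde \<alpha> \<Longrightarrow> Suc i < length \<sigma> \<Longrightarrow> Max (\<sigma> ! i) \<le> Min (\<sigma> ! Suc i)"
  unfolding Atilde_eq set_chain_def by (auto split: if_splits dest!: spec[of _ "Suc i"])

lemma Atilde_sorted:
  assumes A: "\<sigma> \<in> Atilde \<alpha>" and ij: "i < j" "j < length \<sigma>" and xy: "x \<in> \<sigma> ! i" "y \<in> \<sigma> ! j"
  shows "x \<le> y"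
  using ij xy
proof (induction j arbitrary: y)
  case 0 then show ?case by simp
next
  case (Suc j)
  have fin: "pos_finite (\<sigma> ! j)" "pos_finite (\<sigma> ! Suc j)"
    using Atilde_pos_finite[OF A] Suc.prems by auto
  have "x \<le> Max (\<sigma> ! j)"
  proof (cases "i = j")
    case True with Suc.prems fin show ?thesis by (simp add: pos_finite_def)
  next
    case False
    with Suc.prems fin show ?thesis by (intro Suc.IH) (auto simp: pos_finite_def)
  qed
  also have "\<dots> \<le> Min (\<sigma> ! Suc j)" using Atilde_Max_le_Min[OF A] Suc.prems by blast
  also have "\<dots> \<le> y" using fin Suc.prems by (simp add: pos_finite_def)
  finally show ?case .
qed

lemma Atilde_Min_hd_le:
  assumes A: "\<sigma> \<in> Atilde \<alpha>" and q: "q < length \<sigma>" "x \<in> \<sigma> ! q"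
  shows "Min (hd \<sigma>) \<le> x"
proof -
  have ne: "\<sigma> \<noteq> []" using q by auto
  then have "pos_finite (hd \<sigma>)" using Atilde_pos_finite[OF A] by simp
  moreover have "hd \<sigma> = \<sigma> ! 0" using ne by (simp add: hd_conv_nth)
  ultimately have "Min (\<sigma> ! 0) \<in> \<sigma> ! 0" "finite (\<sigma> ! 0)" "Min (hd \<sigma>) = Min (\<sigma> ! 0)"
    by (simp_all add: pos_finite_def)
  with q show ?thesis by (cases q) (auto intro: Atilde_sorted[OF A])
qed

lemma wt_eq_length_filter: "wt \<sigma> k = length (filter (\<lambda>S. k \<in> S) \<sigma>)"
  unfolding wt_def by (simp add: length_filter_conv_card)

lemma wt_Nil [simp]: "wt [] k = 0"
  by (simp add: wt_eq_length_filter)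

lemma wt_Cons [simp]: "wt (S # \<sigma>) k = (if k \<in> S then 1 else 0) + wt \<sigma> k"
  by (simp add: wt_eq_length_filter)

lemma wt_pos_iff: "0 < wt \<sigma> k \<longleftrightarrow> (\<exists>S\<in>set \<sigma>. k \<in> S)"
  by (induct \<sigma>) auto

definition supp :: "(nat \<Rightarrow> nat) \<Rightarrow> nat set" where
  "supp c = {k. c k \<noteq> 0}"

definition Atilde_wt :: "nat list \<Rightarrow> (nat \<Rightarrow> nat) \<Rightarrow> nat set list set" where
  "Atilde_wt \<alpha> c = {\<sigma>\<in>Atilde \<alpha>. wt \<sigma> = c}"

lemma Atilde_wt_entry_nonzero: "\<sigma> \<in> Atilde_wt \<alpha> c \<Longrightarrow> S \<in> set \<sigma> \<Longrightarrow> x \<in> S \<Longrightarrow> c x \<noteq> 0"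
  unfolding Atilde_wt_def using wt_pos_iff[of \<sigma> x] by auto

lemma Atilde_wt_Min_hd_nonzero:
  assumes "\<sigma> \<in> Atilde_wt \<alpha> c" and "\<sigma> \<noteq> []"
  shows "c (Min (hd \<sigma>)) \<noteq> 0"
proof -
  have "pos_finite (hd \<sigma>)"
    using assms Atilde_pos_finite by (auto simp: Atilde_wt_def)
  then have "Min (hd \<sigma>) \<in> hd \<sigma>"
    by (simp add: pos_finite_def)
  then show ?thesis
    using Atilde_wt_entry_nonzero[OF assms(1) hd_in_set[OF assms(2)]] by blast
qed

lemma finite_Atilde_wt:
  assumes "finite (supp c)"
  shows "finite (Atilde_wt \<alpha> c)"
proof (rule finite_subset)
  show "Atilde_wt \<alpha> c \<subseteq> {\<sigma>. set \<sigma> \<subseteq> Pow (supp c) \<and> length \<sigma> = sum_list \<alpha>}"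
  proof
    fix \<sigma> assume s: "\<sigma> \<in> Atilde_wt \<alpha> c"
    then have "length \<sigma> = sum_list \<alpha>" by (simp add: Atilde_wt_def Atilde_def)
    moreover have "set \<sigma> \<subseteq> Pow (supp c)" using Atilde_wt_entry_nonzero[OF s] by (auto simp: supp_def)
    ultimately show "\<sigma> \<in> {\<sigma>. set \<sigma> \<subseteq> Pow (supp c) \<and> length \<sigma> = sum_list \<alpha>}" by simp
  qed
  show "finite {\<sigma>. set \<sigma> \<subseteq> Pow (supp c) \<and> length \<sigma> = sum_list \<alpha>}"
    using assms by (intro finite_lists_length_eq) auto
qed

lemma Atilde_wt_Nil: "Atilde_wt [] c = (if c = (\<lambda>_. 0) then {[]} else {})"
  unfolding Atilde_wt_def Atilde_Nil by (auto simp: fun_eq_iff)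

lemma Atilde_wt_nonempty_list:
  "\<sigma> \<in> Atilde_wt (a # r) c \<Longrightarrow> composition (a # r) \<Longrightarrow> \<sigma> \<noteq> []"
  by (auto simp: Atilde_wt_def Atilde_def composition_def)

lemma Atilde_wt_zero: "composition \<alpha> \<Longrightarrow> \<alpha> \<noteq> [] \<Longrightarrow> Atilde_wt \<alpha> (\<lambda>_. 0) = {}"
proof (rule equals0I)
  fix \<sigma> assume p: "composition \<alpha>" "\<alpha> \<noteq> []" and s: "\<sigma> \<in> Atilde_wt \<alpha> (\<lambda>_. 0)"
  then obtain S \<sigma>' where "\<sigma> = S # \<sigma>'"
    using Atilde_wt_nonempty_list by (cases \<alpha>; cases \<sigma>) auto
  with Atilde_wt_Min_hd_nonzero[OF s] show False by simp
qed

lemma sum_supp_less: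
  assumes f: "finite (supp c)" and le: "\<And>x. c' x \<le> c x" and lt: "c' p < c p"
  shows "sum c' (supp c') < sum c (supp c)"
proof -
  have ss: "supp c' \<subseteq> supp c"
  proof
    fix x assume "x \<in> supp c'"
    with le[of x] show "x \<in> supp c" by (simp add: supp_def)
  qed
  have "sum c' (supp c') = sum c' (supp c)"
    by (rule sum.mono_neutral_left[OF f ss]) (auto simp: supp_def)
  also have "\<dots> < sum c (supp c)"
  proof (rule sum_strict_mono_ex1[OF f])
    show "\<forall>x\<in>supp c. c' x \<le> c x" using le by simp
    show "\<exists>x\<in>supp c. c' x < c x" using lt by (intro bexI[of _ p]) (auto simp: supp_def)
  qed
  finally show ?thesis .
qed

definition insert_hd :: "nat \<Rightarrow> nat set list \<Rightarrow> nat set list" where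
  "insert_hd x \<tau> = insert x (hd \<tau>) # tl \<tau>"

lemma inj_on_insert_hd:
  assumes "\<And>\<tau>. \<tau> \<in> T \<Longrightarrow> \<tau> \<noteq> [] \<and> x \<notin> hd \<tau>"
  shows "inj_on (insert_hd x) T"
proof (rule inj_onI)
  fix \<tau> \<tau>' assume "\<tau> \<in> T" "\<tau>' \<in> T" and "insert_hd x \<tau> = insert_hd x \<tau>'"
  with assms[of \<tau>] assms[of \<tau>'] show "\<tau> = \<tau>'"
    unfolding insert_hd_def by (metis insert_ident list.collapse list.inject)
qed

locale min_support =
  fixes c :: "nat \<Rightarrow> nat"
  assumes c_0: "c 0 = 0" and finite_supp: "finite (supp c)" and supp_ne: "supp c \<noteq> {}"
begin

definition kmin where "kmin = Min (supp c)"

lemma c_kmin: "c kmin \<noteq> 0"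
  using Min_in[OF finite_supp supp_ne] by (simp add: kmin_def supp_def)

lemma kmin_le: "c x \<noteq> 0 \<Longrightarrow> kmin \<le> x"
  using Min_le[OF finite_supp] by (simp add: kmin_def supp_def)

lemma kmin_pos: "0 < kmin"
  using c_kmin c_0 by (cases kmin) auto

definition c_dec where "c_dec = c(kmin := c kmin - 1)"

definition c_del where "c_del = c(kmin := 0)"

lemma c_del_nonzero: "c_del x \<noteq> 0 \<Longrightarrow> kmin < x \<and> c x \<noteq> 0"
  using kmin_le[of x] by (auto simp: c_del_def split: if_splits)

lemma finite_supp_c_del: "finite (supp c_del)"
  using finite_supp by (rule finite_subset[rotated]) (auto simp: supp_def c_del_def)

lemma c_del_0: "c_del 0 = 0"
  using c_0 by (simp add: c_del_def)

lemma c_dec_0: "c_dec 0 = 0"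
  using c_0 kmin_pos by (simp add: c_dec_def)

lemma finite_supp_c_dec: "finite (supp c_dec)"
  using finite_supp by (rule finite_subset[rotated]) (auto simp: supp_def c_dec_def)

lemma sum_supp_c_del_less: "c kmin = 1 \<Longrightarrow> sum c_del (supp c_del) < sum c (supp c)"
  using sum_supp_less[OF finite_supp, of c_del kmin] by (simp add: c_del_def)

lemma sum_supp_c_dec_less: "sum c_dec (supp c_dec) < sum c (supp c)"
  using sum_supp_less[OF finite_supp, of c_dec kmin] c_kmin by (simp add: c_dec_def)

lemma Atilde_wt_hd:
  assumes s: "\<sigma> \<in> Atilde_wt (a # r) c" and p: "composition (a # r)"
  obtains S \<sigma>' where "\<sigma> = S # \<sigma>'" "kmin \<in> S" "pos_finite S" "\<And>x. x \<in> S \<Longrightarrow> kmin \<le> x"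
proof -
  obtain S \<sigma>' where e: "\<sigma> = S # \<sigma>'"
    using Atilde_wt_nonempty_list[OF s p] by (cases \<sigma>) auto
  have A: "\<sigma> \<in> Atilde (a # r)" and w: "wt \<sigma> = c"
    using s by (auto simp: Atilde_wt_def)
  have S: "pos_finite S"
    using Atilde_pos_finite[OF A] e by simp
  have ge: "kmin \<le> x" if "x \<in> S" for x
    using Atilde_wt_entry_nonzero[OF s, of S x] e that kmin_le by simp
  have "kmin \<in> S"
  proof (rule ccontr)
    assume nk: "kmin \<notin> S"
    have "0 < wt \<sigma> kmin" using w c_kmin by simp
    then obtain j where j: "j < length \<sigma>" "kmin \<in> \<sigma> ! j"
      by (auto simp: wt_pos_iff in_set_conv_nth)
    with nk e have "0 < j" by (cases j) auto
    from S obtain x where x: "x \<in> S" by (auto simp: pos_finite_def)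
    have "x \<le> kmin" using Atilde_sorted[OF A \<open>0 < j\<close> j(1), of x kmin] x j e by simp
    with ge[OF x] x nk show False by simp
  qed
  with that e S ge show ?thesis by blast
qed

lemma Atilde_wt_ge2_cases:
  assumes p: "composition (a # r)" and c2: "2 \<le> c kmin" and s: "\<sigma> \<in> Atilde_wt (a # r) c"
  shows "a \<noteq> 1 \<and> \<sigma> \<in> Cons {kmin} ` Atilde_wt ((a - 1) # r) c_dec"
proof -
  obtain S \<sigma>' where e: "\<sigma> = S # \<sigma>'" and kS: "kmin \<in> S" and ge: "\<And>x. x \<in> S \<Longrightarrow> kmin \<le> x"
    using Atilde_wt_hd[OF s p] by metis
  have A: "\<sigma> \<in> Atilde (a # r)" and w: "wt \<sigma> = c" using s by (auto simp: Atilde_wt_def)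
  have A': "\<sigma>' \<in> Atilde (dec_head (a # r))"
    and ord: "\<sigma>' \<noteq> [] \<longrightarrow> (if a = 1 then Max S < Min (hd \<sigma>') else Max S \<le> Min (hd \<sigma>'))"
    using A e Atilde_Cons[OF p] by auto
  have "0 < wt \<sigma>' kmin" using w c2 e kS by (auto dest: fun_cong[of _ _ kmin])
  then obtain q where q: "q < length \<sigma>'" "kmin \<in> \<sigma>' ! q"
    by (auto simp: wt_pos_iff in_set_conv_nth)
  have "x \<le> kmin" if "x \<in> S" for x
    using Atilde_sorted[OF A, of 0 "Suc q" x kmin] q e that by simp
  with ge kS have Sk: "S = {kmin}" by (auto intro: antisym)
  have "a \<noteq> 1"
  proof
    assume "a = 1"
    with ord Sk q have "kmin < Min (hd \<sigma>')" by auto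
    with Atilde_Min_hd_le[OF A' q] show False by simp
  qed
  moreover from this p have "dec_head (a # r) = (a - 1) # r" by (simp add: composition_def)
  moreover have "wt \<sigma>' x = c_dec x" for x
    using fun_cong[OF w, of x] e Sk by (auto simp: c_dec_def)
  then have "wt \<sigma>' = c_dec" ..
  ultimately show ?thesis using A' e Sk by (simp add: Atilde_wt_def)
qed

lemma Cons_kmin_in_Atilde_wt_ge2:
  assumes p: "composition (a # r)" and c2: "2 \<le> c kmin" and a: "a \<noteq> 1"
    and s: "\<sigma> \<in> Atilde_wt ((a - 1) # r) c_dec"
  shows "{kmin} # \<sigma> \<in> Atilde_wt (a # r) c"
proof -
  have "kmin \<le> Min (hd \<sigma>)" if "\<sigma> \<noteq> []"
    using Atilde_wt_Min_hd_nonzero[OF s that] kmin_le by (auto simp: c_dec_def split: if_splits)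
  moreover have "pos_finite {kmin}" using kmin_pos by (simp add: pos_finite_def)
  moreover have "dec_head (a # r) = (a - 1) # r" using p a by (simp add: composition_def)
  ultimately have "{kmin} # \<sigma> \<in> Atilde (a # r)"
    unfolding Atilde_Cons[OF p] using s a by (simp add: Atilde_wt_def)
  moreover have "wt ({kmin} # \<sigma>) x = c x" for x
    using s c2 unfolding Atilde_wt_def by (cases "x = kmin") (auto simp: c_dec_def)
  then have "wt ({kmin} # \<sigma>) = c" ..
  ultimately show ?thesis by (simp add: Atilde_wt_def)
qed

lemma Atilde_wt_ge2:
  assumes p: "composition (a # r)" and c2: "2 \<le> c kmin"
  shows "Atilde_wt (a # r) c = (if a = 1 then {} else Cons {kmin} ` Atilde_wt ((a - 1) # r) c_dec)"
  using Atilde_wt_ge2_cases[OF p c2] Cons_kmin_in_Atilde_wt_ge2[OF p c2] by auto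

lemma card_Atilde_wt_ge2:
  assumes "composition (a # r)" and "2 \<le> c kmin"
  shows "card (Atilde_wt (a # r) c) = (if a = 1 then 0 else card (Atilde_wt ((a - 1) # r) c_dec))"
  unfolding Atilde_wt_ge2[OF assms] by (auto simp: card_image)

lemma Atilde_wt_one_cases:
  assumes p: "composition (a # r)" and c1: "c kmin = 1" and s: "\<sigma> \<in> Atilde_wt (a # r) c"
  shows "\<sigma> \<in> Cons {kmin} ` Atilde_wt (dec_head (a # r)) c_del \<union>
           insert_hd kmin ` Atilde_wt (a # r) c_del"
proof -
  obtain S \<sigma>' where e: "\<sigma> = S # \<sigma>'" and kS: "kmin \<in> S" and S: "pos_finite S"
    and ge: "\<And>x. x \<in> S \<Longrightarrow> kmin \<le> x"
    using Atilde_wt_hd[OF s p] by metis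
  have A: "\<sigma> \<in> Atilde (a # r)" and w: "wt \<sigma> = c" using s by (auto simp: Atilde_wt_def)
  have A': "\<sigma>' \<in> Atilde (dec_head (a # r))"
    and ord: "\<sigma>' \<noteq> [] \<longrightarrow> (if a = 1 then Max S < Min (hd \<sigma>') else Max S \<le> Min (hd \<sigma>'))"
    using A e Atilde_Cons[OF p] by auto
  have wt_tl: "c x = (if x \<in> S then 1 else 0) + wt \<sigma>' x" for x
    using fun_cong[OF w, of x] e by simp
  show ?thesis
  proof (cases "S = {kmin}")
    case True
    then have "wt \<sigma>' x = c_del x" for x using wt_tl[of x] c1 by (cases "x = kmin") (simp_all add: c_del_def)
    then have "wt \<sigma>' = c_del" ..
    then have "\<sigma>' \<in> Atilde_wt (dec_head (a # r)) c_del" using A' by (simp add: Atilde_wt_def)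
    with e True show ?thesis by (intro UnI1) simp
  next
    case False
    define X where "X = S - {kmin}"
    have X: "pos_finite X" using False kS S unfolding X_def pos_finite_def by auto
    have SX: "S = insert kmin X" and kX: "kmin \<notin> X" using kS by (auto simp: X_def)
    from X obtain y where "y \<in> X" by (auto simp: pos_finite_def)
    then have "kmin \<le> y" "y \<noteq> kmin" using ge[of y] kX by (auto simp: SX)
    then have "kmin < y" by simp
    moreover have "y \<le> Max X" using \<open>y \<in> X\<close> X by (simp add: pos_finite_def)
    ultimately have MX: "Max S = Max X" using X by (simp add: SX pos_finite_def)
    have "X # \<sigma>' \<in> Atilde (a # r)"
      unfolding Atilde_Cons[OF p] using A' ord X by (simp only: MX)
    moreover have "wt (X # \<sigma>') x = c_del x" for x
      using wt_tl[of x] c1 kX by (cases "x \<in> X") (auto simp: SX c_del_def)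
    then have "wt (X # \<sigma>') = c_del" ..
    ultimately have "X # \<sigma>' \<in> Atilde_wt (a # r) c_del" by (simp add: Atilde_wt_def)
    moreover have "\<sigma> = insert_hd kmin (X # \<sigma>')" using e SX by (simp add: insert_hd_def)
    ultimately show ?thesis by (intro UnI2) simp
  qed
qed

lemma Cons_kmin_in_Atilde_wt:
  assumes p: "composition (a # r)" and c1: "c kmin = 1"
    and s: "\<sigma> \<in> Atilde_wt (dec_head (a # r)) c_del"
  shows "{kmin} # \<sigma> \<in> Atilde_wt (a # r) c"
proof -
  have "kmin < Min (hd \<sigma>)" if "\<sigma> \<noteq> []"
    using Atilde_wt_Min_hd_nonzero[OF s that] c_del_nonzero by blast
  moreover have "pos_finite {kmin}" using kmin_pos by (simp add: pos_finite_def)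
  moreover have "\<sigma> \<in> Atilde (dec_head (a # r))" using s by (simp add: Atilde_wt_def)
  ultimately have "{kmin} # \<sigma> \<in> Atilde (a # r)"
    unfolding Atilde_Cons[OF p] by (simp add: less_imp_le)
  moreover have "wt ({kmin} # \<sigma>) x = c x" for x
    using s c1 unfolding Atilde_wt_def by (cases "x = kmin") (auto simp: c_del_def)
  then have "wt ({kmin} # \<sigma>) = c" ..
  ultimately show ?thesis by (simp add: Atilde_wt_def)
qed

lemma insert_hd_kmin_in_Atilde_wt:
  assumes p: "composition (a # r)" and c1: "c kmin = 1" and s: "\<tau> \<in> Atilde_wt (a # r) c_del"
  shows "insert_hd kmin \<tau> \<in> Atilde_wt (a # r) c" and "kmin \<notin> hd \<tau>"
proof -
  obtain X \<sigma>' where e: "\<tau> = X # \<sigma>'" using Atilde_wt_nonempty_list[OF s p] by (cases \<tau>) auto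
  have A': "\<sigma>' \<in> Atilde (dec_head (a # r))"
    and ord: "\<sigma>' \<noteq> [] \<longrightarrow> (if a = 1 then Max X < Min (hd \<sigma>') else Max X \<le> Min (hd \<sigma>'))"
    and X: "pos_finite X"
    using s e Atilde_Cons[OF p] by (auto simp: Atilde_wt_def)
  have gt: "kmin < x" if "x \<in> X" for x
    using Atilde_wt_entry_nonzero[OF s, of X x] e that c_del_nonzero by auto
  then show "kmin \<notin> hd \<tau>" using e by auto
  obtain y where "y \<in> X" using X by (auto simp: pos_finite_def)
  moreover have "y \<le> Max X" using \<open>y \<in> X\<close> X by (simp add: pos_finite_def)
  ultimately have MX: "Max (insert kmin X) = Max X" using gt X by (simp add: pos_finite_def)
  have "pos_finite (insert kmin X)" using X kmin_pos by (auto simp: pos_finite_def)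
  then have "insert kmin X # \<sigma>' \<in> Atilde (a # r)"
    unfolding Atilde_Cons[OF p] MX using A' ord by blast
  moreover have "wt (insert kmin X # \<sigma>') x = c x" for x
    using s e c1 gt[of x] unfolding Atilde_wt_def
    by (cases "x = kmin") (auto simp: c_del_def dest: fun_cong[of _ _ x])
  then have "wt (insert kmin X # \<sigma>') = c" ..
  ultimately show "insert_hd kmin \<tau> \<in> Atilde_wt (a # r) c"
    using e by (simp add: Atilde_wt_def insert_hd_def)
qed

lemma Atilde_wt_one:
  assumes p: "composition (a # r)" and c1: "c kmin = 1"
  shows "Atilde_wt (a # r) c =
    Cons {kmin} ` Atilde_wt (dec_head (a # r)) c_del \<union> insert_hd kmin ` Atilde_wt (a # r) c_del"
proof
  show "Atilde_wt (a # r) c \<subseteq>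
      Cons {kmin} ` Atilde_wt (dec_head (a # r)) c_del \<union> insert_hd kmin ` Atilde_wt (a # r) c_del"
    using Atilde_wt_one_cases[OF p c1] by (rule subsetI)
  show "Cons {kmin} ` Atilde_wt (dec_head (a # r)) c_del \<union> insert_hd kmin ` Atilde_wt (a # r) c_del
      \<subseteq> Atilde_wt (a # r) c"
    using Cons_kmin_in_Atilde_wt[OF p c1] insert_hd_kmin_in_Atilde_wt(1)[OF p c1] by auto
qed

lemma card_Atilde_wt_one:
  assumes p: "composition (a # r)" and c1: "c kmin = 1"
  shows "card (Atilde_wt (a # r) c) =
    card (Atilde_wt (dec_head (a # r)) c_del) + card (Atilde_wt (a # r) c_del)"
proof -
  have hd: "\<tau> \<noteq> [] \<and> kmin \<notin> hd \<tau>" if "\<tau> \<in> Atilde_wt (a # r) c_del" for \<tau>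
    using Atilde_wt_nonempty_list[OF that p] insert_hd_kmin_in_Atilde_wt(2)[OF p c1 that] by simp
  have disj: "Cons {kmin} ` Atilde_wt (dec_head (a # r)) c_del \<inter> insert_hd kmin ` Atilde_wt (a # r) c_del = {}"
  proof (rule equals0I)
    fix z assume "z \<in> Cons {kmin} ` Atilde_wt (dec_head (a # r)) c_del \<inter> insert_hd kmin ` Atilde_wt (a # r) c_del"
    then obtain \<sigma> \<tau> where z: "z = {kmin} # \<sigma>" "z = insert_hd kmin \<tau>"
      and \<tau>: "\<tau> \<in> Atilde_wt (a # r) c_del" by blast
    have "pos_finite (hd \<tau>)" using \<tau> hd[OF \<tau>] Atilde_pos_finite by (auto simp: Atilde_wt_def)
    moreover have "insert kmin (hd \<tau>) = {kmin}" using z by (simp add: insert_hd_def)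
    ultimately show False using hd[OF \<tau>] by (auto simp: pos_finite_def)
  qed
  have fin: "finite (Atilde_wt \<alpha> c_del)" for \<alpha>
    by (rule finite_Atilde_wt[OF finite_supp_c_del])
  show ?thesis
    unfolding Atilde_wt_one[OF p c1]
    using card_Un_disjoint[OF finite_imageI[OF fin] finite_imageI[OF fin] disj]
    by (simp add: card_image inj_on_insert_hd hd)
qed

end

section \<open>Block decompositions and red sets\<close>

definition first_black :: "(nat \<Rightarrow> nat) \<Rightarrow> nat set \<Rightarrow> nat \<Rightarrow> nat \<Rightarrow> bool" where
  "first_black c R lo hi \<longleftrightarrow>
     (\<forall>k\<in>{lo<..hi}. c k \<noteq> 0 \<and> (\<forall>k'\<in>{lo<..<k}. c k' = 0) \<longrightarrow> k \<notin> R)"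

definition block_ok :: "(nat \<Rightarrow> nat) \<Rightarrow> nat set \<Rightarrow> nat \<Rightarrow> nat \<Rightarrow> nat \<Rightarrow> bool" where
  "block_ok c R v lo hi \<longleftrightarrow>
     sum c {lo<..hi} = v + card ({lo<..hi} \<inter> R) \<and> first_black c R lo hi"

text \<open>The indices \<open>i\<^sub>0 < i\<^sub>1 < \<dots>\<close> in the definition of a glide cut the positions into
  consecutive blocks \<open>(i\<^bsub>j-1\<^esub>, i\<^sub>j]\<close>, one for each part of \<open>\<alpha>\<close>; here \<open>c\<close> is the exponent vector
  and \<open>R\<close> the set of red positions.\<close>

fun blocks :: "(nat \<Rightarrow> nat) \<Rightarrow> nat set \<Rightarrow> nat \<Rightarrow> nat list \<Rightarrow> bool" where
  "blocks c R lo [] \<longleftrightarrow> (\<forall>k>lo. c k = 0)"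
| "blocks c R lo (v # \<alpha>) \<longleftrightarrow> (\<exists>hi>lo. block_ok c R v lo hi \<and> blocks c R hi \<alpha>)"

definition red_sets :: "nat list \<Rightarrow> (nat \<Rightarrow> nat) \<Rightarrow> nat set set" where
  "red_sets \<alpha> c = {R. R \<subseteq> supp c \<and> blocks c R 0 \<alpha>}"

lemma finite_red_sets: "finite (supp c) \<Longrightarrow> finite (red_sets \<alpha> c)"
  by (rule finite_subset[of _ "Pow (supp c)"]) (auto simp: red_sets_def)

lemma sum_fun_upd: "finite A \<Longrightarrow> p \<in> A \<Longrightarrow> sum (f(p := v)) A + f p = sum f A + v"
  by (simp add: sum.remove ac_simps)

lemma sum_ge_card_inter:
  assumes "finite A" and "R \<subseteq> supp c" and "p \<in> A" and "p \<notin> R"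
  shows "c p + card (A \<inter> R) \<le> sum c A"
proof -
  have "card (A \<inter> R) = (\<Sum>k\<in>A \<inter> R. 1)" by simp
  also have "\<dots> \<le> sum c (A \<inter> R)" using assms(2) by (intro sum_mono) (auto simp: supp_def)
  also have "\<dots> \<le> sum c (A - {p})" using assms by (intro sum_mono2) auto
  finally show ?thesis using assms by (simp add: sum.remove)
qed

lemma first_nonzero_exists:
  fixes c :: "nat \<Rightarrow> nat"
  assumes "x \<in> {lo<..hi}" and "c x \<noteq> 0"
  obtains k where "k \<in> {lo<..hi}" "c k \<noteq> 0" "\<forall>k'\<in>{lo<..<k}. c k' = 0"
proof -
  obtain k where k: "k \<in> {lo<..hi} \<and> c k \<noteq> 0" and least: "\<forall>m<k. \<not> (m \<in> {lo<..hi} \<and> c m \<noteq> 0)"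
    using exists_least_iff[of "\<lambda>k. k \<in> {lo<..hi} \<and> c k \<noteq> 0"] assms by blast
  then show ?thesis using that by fastforce
qed

lemma first_black_iff_min:
  assumes "y \<in> {lo<..hi}" and "c y \<noteq> 0" and min: "\<And>x. lo < x \<Longrightarrow> c x \<noteq> 0 \<Longrightarrow> y \<le> x"
  shows "first_black c R lo hi \<longleftrightarrow> y \<notin> R"
proof -
  have "k = y" if k: "k \<in> {lo<..hi}" "c k \<noteq> 0" "\<forall>k'\<in>{lo<..<k}. c k' = 0" for k
  proof (rule ccontr)
    assume "k \<noteq> y"
    with min[of k] k have "y \<in> {lo<..<k}" using assms(1) by auto
    with k(3) assms(2) show False by auto
  qed
  moreover have "\<forall>k'\<in>{lo<..<y}. c k' = 0" using min by force
  ultimately show ?thesis using assms unfolding first_black_def by blast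
qed

lemma first_black_cong:
  assumes "\<And>x. x \<in> {lo<..hi} \<Longrightarrow> (c' x = 0 \<longleftrightarrow> c x = 0) \<and> (x \<in> R' \<longleftrightarrow> x \<in> R)"
  shows "first_black c' R' lo hi \<longleftrightarrow> first_black c R lo hi"
  unfolding first_black_def
proof (intro ball_cong refl)
  fix k assume k: "k \<in> {lo<..hi}"
  then have "\<forall>k'\<in>{lo<..<k}. c' k' = 0 \<longleftrightarrow> c k' = 0" using assms by auto
  with assms[OF k] show "(c' k \<noteq> 0 \<and> (\<forall>k'\<in>{lo<..<k}. c' k' = 0) \<longrightarrow> k \<notin> R') \<longleftrightarrow>
      (c k \<noteq> 0 \<and> (\<forall>k'\<in>{lo<..<k}. c k' = 0) \<longrightarrow> k \<notin> R)" by auto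
qed

lemma block_ok_cong:
  assumes "\<And>x. x \<in> {lo<..hi} \<Longrightarrow> c' x = c x \<and> (x \<in> R' \<longleftrightarrow> x \<in> R)"
  shows "block_ok c' R' v lo hi \<longleftrightarrow> block_ok c R v lo hi"
proof -
  have "sum c' {lo<..hi} = sum c {lo<..hi}" using assms by (intro sum.cong) auto
  moreover have "{lo<..hi} \<inter> R' = {lo<..hi} \<inter> R" using assms by blast
  moreover have "first_black c' R' lo hi \<longleftrightarrow> first_black c R lo hi"
    using assms by (intro first_black_cong) auto
  ultimately show ?thesis unfolding block_ok_def by simp
qed

lemma block_ok_fun_upd:
  assumes p: "p \<in> {lo<..hi}" and nz: "c p \<noteq> 0" "w \<noteq> 0" and v: "v' + c p = v + w"
  shows "block_ok (c(p := w)) R v' lo hi \<longleftrightarrow> block_ok c R v lo hi"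
proof -
  have "sum (c(p := w)) {lo<..hi} + c p = sum c {lo<..hi} + w"
    using p by (intro sum_fun_upd) auto
  with v have "sum (c(p := w)) {lo<..hi} = v' + card ({lo<..hi} \<inter> R) \<longleftrightarrow>
      sum c {lo<..hi} = v + card ({lo<..hi} \<inter> R)" by linarith
  moreover have "first_black (c(p := w)) R lo hi \<longleftrightarrow> first_black c R lo hi"
    using nz by (intro first_black_cong) auto
  ultimately show ?thesis unfolding block_ok_def by simp
qed

lemma blocks_cong:
  assumes "\<And>x. lo < x \<Longrightarrow> c' x = c x \<and> (x \<in> R' \<longleftrightarrow> x \<in> R)"
  shows "blocks c' R' lo \<alpha> \<longleftrightarrow> blocks c R lo \<alpha>"
  using assms
proof (induction \<alpha> arbitrary: lo)
  case Nil then show ?case by auto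
next
  case (Cons v \<alpha>)
  have "block_ok c' R' v lo hi \<longleftrightarrow> block_ok c R v lo hi" for hi
    using Cons.prems by (intro block_ok_cong) auto
  moreover have "blocks c' R' hi \<alpha> \<longleftrightarrow> blocks c R hi \<alpha>" if "lo < hi" for hi
    using Cons.prems that by (intro Cons.IH) auto
  ultimately show ?case by auto
qed

lemma block_ok_nonzero: "block_ok c R v lo hi \<Longrightarrow> 0 < v \<Longrightarrow> \<exists>x\<in>{lo<..hi}. c x \<noteq> 0"
  by (rule ccontr) (simp add: block_ok_def)

lemma block_ok_le:
  "block_ok c R v lo hi \<Longrightarrow> R \<subseteq> supp c \<Longrightarrow> p \<in> {lo<..hi} \<Longrightarrow> p \<notin> R \<Longrightarrow> c p \<le> v"
  using sum_ge_card_inter[of "{lo<..hi}" R c p] by (simp add: block_ok_def)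

lemma block_ok_zero:
  assumes b: "block_ok c R 0 lo hi" and R: "R \<subseteq> supp c" and x: "x \<in> {lo<..hi}"
  shows "c x = 0"
proof (rule ccontr)
  assume "c x \<noteq> 0"
  then obtain k where k: "k \<in> {lo<..hi}" "c k \<noteq> 0" "\<forall>k'\<in>{lo<..<k}. c k' = 0"
    using first_nonzero_exists x by metis
  then have "k \<notin> R" using b by (auto simp: block_ok_def first_black_def)
  with block_ok_le[OF b R k(1)] k show False by simp
qed

lemma block_ok_skip_zeros:
  assumes m: "lo \<le> m" "m \<le> hi" and z: "\<And>x. x \<in> {lo<..m} \<Longrightarrow> c x = 0" and R: "R \<subseteq> supp c"
  shows "block_ok c R v lo hi \<longleftrightarrow> block_ok c R v m hi"
proof -
  have split: "{lo<..hi} = {lo<..m} \<union> {m<..hi}" using m by auto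
  then have "sum c {lo<..hi} = sum c {m<..hi}"
    using z by (simp add: sum.union_disjoint ivl_disj_int)
  moreover have "{lo<..m} \<inter> R = {}" using z R by (auto simp: supp_def)
  then have "{lo<..hi} \<inter> R = {m<..hi} \<inter> R" using split by blast
  moreover have "first_black c R lo hi \<longleftrightarrow> first_black c R m hi"
    unfolding first_black_def
  proof (intro iffI ballI impI)
    fix k assume L: "\<forall>k\<in>{lo<..hi}. c k \<noteq> 0 \<and> (\<forall>k'\<in>{lo<..<k}. c k' = 0) \<longrightarrow> k \<notin> R"
      and k: "k \<in> {m<..hi}" "c k \<noteq> 0 \<and> (\<forall>k'\<in>{m<..<k}. c k' = 0)"
    have "\<forall>k'\<in>{lo<..<k}. c k' = 0"
    proof
      fix k' assume "k' \<in> {lo<..<k}"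
      with z k show "c k' = 0" by (cases "k' \<le> m") auto
    qed
    with L k m show "k \<notin> R" by auto
  next
    fix k assume L: "\<forall>k\<in>{m<..hi}. c k \<noteq> 0 \<and> (\<forall>k'\<in>{m<..<k}. c k' = 0) \<longrightarrow> k \<notin> R"
      and k: "k \<in> {lo<..hi}" "c k \<noteq> 0 \<and> (\<forall>k'\<in>{lo<..<k}. c k' = 0)"
    have "m < k" using z[of k] k by force
    with L k m show "k \<notin> R" by auto
  qed
  ultimately show ?thesis unfolding block_ok_def by simp
qed

lemma block_ok_drop_zeros_right:
  assumes m: "lo \<le> m" "m \<le> hi" and z: "\<And>x. x \<in> {m<..hi} \<Longrightarrow> c x = 0" and R: "R \<subseteq> supp c"
  shows "block_ok c R v lo hi \<longleftrightarrow> block_ok c R v lo m"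
proof -
  have split: "{lo<..hi} = {lo<..m} \<union> {m<..hi}" using m by auto
  then have "sum c {lo<..hi} = sum c {lo<..m}"
    using z by (simp add: sum.union_disjoint ivl_disj_int)
  moreover have "{m<..hi} \<inter> R = {}" using z R by (auto simp: supp_def)
  then have "{lo<..hi} \<inter> R = {lo<..m} \<inter> R" using split by blast
  moreover have "first_black c R lo hi \<longleftrightarrow> first_black c R lo m"
    unfolding first_black_def
  proof (intro iffI ballI impI)
    fix k assume L: "\<forall>k\<in>{lo<..hi}. c k \<noteq> 0 \<and> (\<forall>k'\<in>{lo<..<k}. c k' = 0) \<longrightarrow> k \<notin> R"
      and "k \<in> {lo<..m}" "c k \<noteq> 0 \<and> (\<forall>k'\<in>{lo<..<k}. c k' = 0)"
    with m show "k \<notin> R" by auto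
  next
    fix k assume L: "\<forall>k\<in>{lo<..m}. c k \<noteq> 0 \<and> (\<forall>k'\<in>{lo<..<k}. c k' = 0) \<longrightarrow> k \<notin> R"
      and k: "k \<in> {lo<..hi}" "c k \<noteq> 0 \<and> (\<forall>k'\<in>{lo<..<k}. c k' = 0)"
    have "k \<le> m" using z[of k] k by force
    with L k show "k \<notin> R" by auto
  qed
  ultimately show ?thesis unfolding block_ok_def by simp
qed

lemma blocks_skip_zeros:
  assumes p: "composition \<alpha>" and m: "lo \<le> m" and z: "\<And>x. x \<in> {lo<..m} \<Longrightarrow> c x = 0"
    and R: "R \<subseteq> supp c"
  shows "blocks c R lo \<alpha> \<longleftrightarrow> blocks c R m \<alpha>"
proof (cases \<alpha>)
  case Nil
  have "(\<forall>k>lo. c k = 0) \<longleftrightarrow> (\<forall>k>m. c k = 0)"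
  proof
    assume zm: "\<forall>k>m. c k = 0"
    show "\<forall>k>lo. c k = 0"
    proof (intro allI impI)
      fix k assume "lo < k"
      with z zm show "c k = 0" by (cases "k \<le> m") auto
    qed
  qed (use m in auto)
  with Nil show ?thesis by simp
next
  case (Cons v \<alpha>')
  then have v: "0 < v" using p by (simp add: composition_def)
  have "(\<exists>hi>lo. block_ok c R v lo hi \<and> blocks c R hi \<alpha>') \<longleftrightarrow>
      (\<exists>hi>m. block_ok c R v m hi \<and> blocks c R hi \<alpha>')"
  proof
    assume "\<exists>hi>lo. block_ok c R v lo hi \<and> blocks c R hi \<alpha>'"
    then obtain hi where b: "block_ok c R v lo hi" and rest: "blocks c R hi \<alpha>'" by blast
    obtain x where "x \<in> {lo<..hi}" "c x \<noteq> 0" using block_ok_nonzero[OF b v] by blast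
    with z[of x] have "m < hi" by force
    with b rest show "\<exists>hi>m. block_ok c R v m hi \<and> blocks c R hi \<alpha>'"
      using block_ok_skip_zeros[OF m _ z R, of hi v] by auto
  next
    assume "\<exists>hi>m. block_ok c R v m hi \<and> blocks c R hi \<alpha>'"
    then obtain hi where "m < hi" "block_ok c R v m hi" "blocks c R hi \<alpha>'" by blast
    with m show "\<exists>hi>lo. block_ok c R v lo hi \<and> blocks c R hi \<alpha>'"
      using block_ok_skip_zeros[OF m _ z R, of hi v] by (intro exI[of _ hi]) auto
  qed
  with Cons show ?thesis by simp
qed

lemma blocks_min_black:
  assumes "blocks c R lo \<alpha>" and "lo < y" and "c y \<noteq> 0"
    and "\<And>x. lo < x \<Longrightarrow> c x \<noteq> 0 \<Longrightarrow> y \<le> x"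
  shows "y \<notin> R"
  using assms
proof (induction \<alpha> arbitrary: lo)
  case Nil then show ?case by simp
next
  case (Cons v \<alpha>)
  then obtain hi where hi: "lo < hi" "block_ok c R v lo hi" "blocks c R hi \<alpha>" by auto
  show ?case
  proof (cases "y \<le> hi")
    case True
    with hi Cons.prems show ?thesis
      using first_black_iff_min[of y lo hi c] by (auto simp: block_ok_def)
  next
    case False
    with hi Cons.prems show ?thesis by (intro Cons.IH) auto
  qed
qed

lemma red_sets_Cons_iff:
  "R \<in> red_sets (v # \<alpha>) c \<longleftrightarrow> R \<subseteq> supp c \<and> (\<exists>hi>0. block_ok c R v 0 hi \<and> blocks c R hi \<alpha>)"
  by (simp add: red_sets_def)

lemma red_sets_Nil: "c 0 = 0 \<Longrightarrow> red_sets [] c = (if supp c = {} then {{}} else {})"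
  by (auto simp: red_sets_def supp_def) (metis neq0_conv)

lemma red_sets_zero: "composition (a # r) \<Longrightarrow> supp c = {} \<Longrightarrow> red_sets (a # r) c = {}"
  by (auto simp: red_sets_Cons_iff composition_def supp_def dest!: block_ok_nonzero)

context min_support
begin

lemma red_sets_first_block:
  assumes p: "composition (a # r)" and R: "R \<in> red_sets (a # r) c"
  obtains hi where "kmin \<in> {0<..hi}" "block_ok c R a 0 hi" "blocks c R hi r" "kmin \<notin> R"
proof -
  obtain hi where b: "block_ok c R a 0 hi" and rest: "blocks c R hi r"
    using R by (auto simp: red_sets_Cons_iff)
  obtain x where "x \<in> {0<..hi}" "c x \<noteq> 0"
    using block_ok_nonzero[OF b] p by (auto simp: composition_def)
  with kmin_le[of x] kmin_pos have "kmin \<in> {0<..hi}" by auto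
  moreover have "kmin \<notin> R"
    using R kmin_pos c_kmin kmin_le by (intro blocks_min_black[of c R 0 "a # r"]) (auto simp: red_sets_def)
  ultimately show ?thesis using that b rest by blast
qed

lemma red_sets_ge2:
  assumes p: "composition (a # r)" and c2: "2 \<le> c kmin"
  shows "red_sets (a # r) c = (if a = 1 then {} else red_sets ((a - 1) # r) c_dec)"
proof -
  have a: "1 \<le> a" using p by (simp add: composition_def)
  have supp_c_dec: "supp c_dec = supp c" using c2 by (auto simp: supp_def c_dec_def)
  have rest: "blocks c_dec R hi r \<longleftrightarrow> blocks c R hi r" if "kmin \<le> hi" for R hi
    using that by (intro blocks_cong) (auto simp: c_dec_def)
  have first: "block_ok c_dec R (a - 1) 0 hi \<longleftrightarrow> block_ok c R a 0 hi" if "kmin \<in> {0<..hi}" for R hi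
    unfolding c_dec_def using that a c2 c_kmin by (intro block_ok_fun_upd) auto
  have "a \<noteq> 1 \<and> R \<in> red_sets ((a - 1) # r) c_dec" if R: "R \<in> red_sets (a # r) c" for R
  proof -
    obtain hi where k: "kmin \<in> {0<..hi}" and b: "block_ok c R a 0 hi" and bs: "blocks c R hi r"
      and kR: "kmin \<notin> R"
      using red_sets_first_block[OF p R] by blast
    have "c kmin \<le> a" using block_ok_le[OF b _ k kR] R by (simp add: red_sets_def)
    with c2 have "a \<noteq> 1" by simp
    have "block_ok c_dec R (a - 1) 0 hi" "blocks c_dec R hi r"
      using k b bs first rest by auto
    moreover have "R \<subseteq> supp c_dec" using R supp_c_dec by (simp add: red_sets_def)
    ultimately have "R \<in> red_sets ((a - 1) # r) c_dec"
      unfolding red_sets_Cons_iff using k by (intro conjI exI[of _ hi]) auto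
    with \<open>a \<noteq> 1\<close> show ?thesis ..
  qed
  moreover have "R \<in> red_sets (a # r) c" if a1: "a \<noteq> 1" and R: "R \<in> red_sets ((a - 1) # r) c_dec" for R
  proof -
    obtain hi where b: "block_ok c_dec R (a - 1) 0 hi" and bs: "blocks c_dec R hi r"
      using R by (auto simp: red_sets_Cons_iff)
    obtain x where "x \<in> {0<..hi}" "c_dec x \<noteq> 0"
      using block_ok_nonzero[OF b] a a1 by auto
    then have k: "kmin \<in> {0<..hi}"
      using kmin_le[of x] kmin_pos by (auto simp: c_dec_def split: if_splits)
    with b bs first rest have "block_ok c R a 0 hi" "blocks c R hi r" by auto
    moreover have "R \<subseteq> supp c" using R supp_c_dec by (simp add: red_sets_def)
    ultimately show ?thesis
      unfolding red_sets_Cons_iff using k by (intro conjI exI[of _ hi]) auto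
  qed
  ultimately show ?thesis by auto
qed

lemma card_red_sets_ge2:
  assumes "composition (a # r)" and "2 \<le> c kmin"
  shows "card (red_sets (a # r) c) = (if a = 1 then 0 else card (red_sets ((a - 1) # r) c_dec))"
  using red_sets_ge2[OF assms] by simp

definition kmin2 where "kmin2 = Min (supp c_del)"

lemma kmin2_least:
  assumes "supp c_del \<noteq> {}"
  shows "c_del kmin2 \<noteq> 0" and "\<And>x. c_del x \<noteq> 0 \<Longrightarrow> kmin2 \<le> x" and "kmin < kmin2"
proof -
  show c2: "c_del kmin2 \<noteq> 0"
    using Min_in[OF finite_supp_c_del assms] by (simp add: kmin2_def supp_def)
  show "\<And>x. c_del x \<noteq> 0 \<Longrightarrow> kmin2 \<le> x"
    using Min_le[OF finite_supp_c_del] by (simp add: kmin2_def supp_def)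
  show "kmin < kmin2" using c_del_nonzero[OF c2] by simp
qed

lemma c_del_eq: "x \<noteq> kmin \<Longrightarrow> c_del x = c x"
  by (simp add: c_del_def)

lemma c_del_zero_upto_kmin: "x \<le> kmin \<Longrightarrow> c_del x = 0"
  using c_del_nonzero by force

lemma sum_c_del: "kmin \<in> {lo<..hi} \<Longrightarrow> sum c {lo<..hi} = sum c_del {lo<..hi} + c kmin"
  using sum_fun_upd[of "{lo<..hi}" kmin c 0] by (simp add: c_del_def)

lemma kmin2_not_red:
  assumes "R \<in> red_sets \<alpha> c_del" and "supp c_del \<noteq> {}"
  shows "kmin2 \<notin> R"
  using assms kmin2_least[OF assms(2)] kmin_pos
  by (intro blocks_min_black[of c_del R 0 \<alpha>]) (auto simp: red_sets_def)

lemma first_black_c_del: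
  assumes "supp c_del \<noteq> {} \<longrightarrow> kmin2 \<notin> R"
  shows "first_black c_del R 0 hi"
  unfolding first_black_def
proof (intro ballI impI)
  fix k assume k: "k \<in> {0<..hi}" and first: "c_del k \<noteq> 0 \<and> (\<forall>k'\<in>{0<..<k}. c_del k' = 0)"
  then have ne: "supp c_del \<noteq> {}" by (auto simp: supp_def)
  have "k = kmin2"
    using kmin2_least[OF ne] kmin_pos first by (metis greaterThanLessThan_iff le_neq_implies_less order.strict_trans)
  with assms ne show "k \<notin> R" by simp
qed

lemma red_sets_one_dec_head:
  assumes p: "composition (a # r)" and c1: "c kmin = 1" and R: "R \<in> red_sets (a # r) c"
    and black: "supp c_del \<noteq> {} \<longrightarrow> kmin2 \<notin> R"
  shows "R \<in> red_sets (dec_head (a # r)) c_del"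
proof -
  obtain hi where k: "kmin \<in> {0<..hi}" and b: "block_ok c R a 0 hi" and bs: "blocks c R hi r"
    and kR: "kmin \<notin> R"
    using red_sets_first_block[OF p R] by blast
  have Rs: "R \<subseteq> supp c_del" using R kR by (auto simp: red_sets_def supp_def c_del_def)
  have a: "1 \<le> a" using p by (simp add: composition_def)
  have "sum c_del {0<..hi} + 1 = a + card ({0<..hi} \<inter> R)"
    using b sum_c_del[OF k] c1 by (simp add: block_ok_def)
  with a have "sum c_del {0<..hi} = a - 1 + card ({0<..hi} \<inter> R)" by linarith
  with first_black_c_del[OF black] have b': "block_ok c_del R (a - 1) 0 hi"
    by (simp add: block_ok_def)
  have bs': "blocks c_del R hi r"
    using bs k by (subst blocks_cong) (auto simp: c_del_eq)
  show ?thesis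
  proof (cases "a = 1")
    case True
    have "blocks c_del R 0 r"
      using blocks_skip_zeros[of r 0 hi c_del R] block_ok_zero[of c_del R 0 hi] b' bs' Rs True p
      by (simp add: composition_def)
    with True Rs show ?thesis by (simp add: red_sets_def)
  next
    case False
    with a b' bs' Rs k show ?thesis
      by (simp add: red_sets_Cons_iff) (intro exI[of _ hi]; simp)
  qed
qed

lemma red_sets_one_of_dec_head:
  assumes p: "composition (a # r)" and c1: "c kmin = 1"
    and R: "R \<in> red_sets (dec_head (a # r)) c_del"
  shows "R \<in> red_sets (a # r) c"
proof -
  have Rs: "R \<subseteq> supp c_del" using R by (simp add: red_sets_def)
  then have kR: "kmin \<notin> R" by (auto simp: supp_def c_del_def)
  have a: "1 \<le> a" using p by (simp add: composition_def)
  obtain hi where k: "kmin \<in> {0<..hi}" and b: "block_ok c_del R (a - 1) 0 hi"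
    and bs: "blocks c_del R hi r"
  proof (cases "a = 1")
    case True
    have "blocks c_del R kmin r"
      using R blocks_skip_zeros[of r 0 kmin c_del R] c_del_zero_upto_kmin Rs p True
      by (simp add: red_sets_def composition_def)
    moreover have "block_ok c_del R 0 0 kmin"
      using c_del_zero_upto_kmin Rs by (auto simp: block_ok_def first_black_def supp_def)
    ultimately show ?thesis using that[of kmin] True kmin_pos by simp
  next
    case False
    then obtain hi where b: "block_ok c_del R (a - 1) 0 hi" and bs: "blocks c_del R hi r"
      using R a by (auto simp: red_sets_Cons_iff)
    obtain x where "x \<in> {0<..hi}" "c_del x \<noteq> 0" using block_ok_nonzero[OF b] False a by auto
    with c_del_nonzero[of x] kmin_pos have "kmin \<in> {0<..hi}" by auto
    with b bs that show ?thesis by blast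
  qed
  have "first_black c R 0 hi"
    using first_black_iff_min[of kmin 0 hi c R] k c_kmin kmin_le kR by blast
  then have "block_ok c R a 0 hi"
    using b sum_c_del[OF k] c1 a by (simp add: block_ok_def)
  moreover have "blocks c R hi r"
    using bs k by (subst (asm) blocks_cong) (auto simp: c_del_eq)
  moreover have "R \<subseteq> supp c" using Rs c_del_nonzero by (auto simp: supp_def)
  ultimately show ?thesis
    unfolding red_sets_Cons_iff using k by (intro conjI exI[of _ hi]) auto
qed

lemma red_sets_one_remove_kmin2:
  assumes p: "composition (a # r)" and c1: "c kmin = 1" and R: "R \<in> red_sets (a # r) c"
    and ne: "supp c_del \<noteq> {}" and k2R: "kmin2 \<in> R"
  shows "R - {kmin2} \<in> red_sets (a # r) c_del"
proof -
  obtain hi where k: "kmin \<in> {0<..hi}" and b: "block_ok c R a 0 hi" and bs: "blocks c R hi r"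
    and kR: "kmin \<notin> R"
    using red_sets_first_block[OF p R] by blast
  note k2 = kmin2_least[OF ne]
  have k2_nz: "c kmin2 \<noteq> 0" using k2 c_del_nonzero by blast
  have k2_min: "kmin2 \<le> x" if "kmin < x" "c x \<noteq> 0" for x
    using k2(2)[of x] that c_del_eq[of x] by simp
  have k2_in: "kmin2 \<in> {0<..hi}"
  proof (rule ccontr)
    assume "kmin2 \<notin> {0<..hi}"
    with k k2 have "hi < kmin2" by auto
    with k k2_nz k2_min have "kmin2 \<notin> R" by (intro blocks_min_black[OF bs]) auto
    with k2R show False by simp
  qed
  let ?A = "{0<..hi}"
  have "card (?A \<inter> R) = card (?A \<inter> (R - {kmin2})) + 1"
  proof -
    have "Suc (card (?A \<inter> R - {kmin2})) = card (?A \<inter> R)"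
      by (rule card_Suc_Diff1) (use k2_in k2R in auto)
    moreover have "?A \<inter> (R - {kmin2}) = (?A \<inter> R) - {kmin2}" by blast
    ultimately show ?thesis by simp
  qed
  then have "sum c_del ?A = a + card (?A \<inter> (R - {kmin2}))"
    using b sum_c_del[OF k] c1 by (simp add: block_ok_def)
  moreover have "first_black c_del (R - {kmin2}) 0 hi"
    using first_black_iff_min[of kmin2 0 hi c_del "R - {kmin2}"] k2_in k2 by blast
  ultimately have "block_ok c_del (R - {kmin2}) a 0 hi" by (simp add: block_ok_def)
  moreover have "blocks c_del (R - {kmin2}) hi r"
    using bs k k2_in by (subst blocks_cong) (auto simp: c_del_eq)
  moreover have "R - {kmin2} \<subseteq> supp c_del"
    using R kR by (auto simp: red_sets_def supp_def c_del_def)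
  ultimately show ?thesis
    unfolding red_sets_Cons_iff using k by (intro conjI exI[of _ hi]) auto
qed

lemma red_sets_one_insert_kmin2:
  assumes p: "composition (a # r)" and c1: "c kmin = 1" and R: "R \<in> red_sets (a # r) c_del"
  shows "insert kmin2 R \<in> red_sets (a # r) c" and "supp c_del \<noteq> {}" and "kmin2 \<notin> R"
proof -
  obtain hi where b: "block_ok c_del R a 0 hi" and bs: "blocks c_del R hi r"
    and Rs: "R \<subseteq> supp c_del"
    using R by (auto simp: red_sets_Cons_iff)
  obtain x where x: "x \<in> {0<..hi}" "c_del x \<noteq> 0"
    using block_ok_nonzero[OF b] p by (auto simp: composition_def)
  then show ne: "supp c_del \<noteq> {}" by (auto simp: supp_def)
  note k2 = kmin2_least[OF ne]
  show k2R: "kmin2 \<notin> R" using kmin2_not_red[OF R ne] .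
  have k2_in: "kmin2 \<in> {0<..hi}" using x k2 kmin_pos by (meson greaterThanAtMost_iff le_less_trans order.trans less_imp_le)
  with k2 kmin_pos have k: "kmin \<in> {0<..hi}" by auto
  have kR: "kmin \<notin> insert kmin2 R" using Rs k2 by (auto simp: supp_def c_del_def)
  let ?A = "{0<..hi}"
  have "card (?A \<inter> insert kmin2 R) = card (?A \<inter> R) + 1"
    using k2_in k2R by (simp add: Int_insert_right)
  then have "sum c ?A = a + card (?A \<inter> insert kmin2 R)"
    using b sum_c_del[OF k] c1 by (simp add: block_ok_def)
  moreover have "first_black c (insert kmin2 R) 0 hi"
    using first_black_iff_min[of kmin 0 hi c "insert kmin2 R"] k c_kmin kmin_le kR by blast
  ultimately have "block_ok c (insert kmin2 R) a 0 hi" by (simp add: block_ok_def)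
  moreover have "blocks c (insert kmin2 R) hi r"
    using bs k k2_in by (subst (asm) blocks_cong) (auto simp: c_del_eq)
  moreover have "insert kmin2 R \<subseteq> supp c"
    using Rs k2 c_del_nonzero by (auto simp: supp_def)
  ultimately show "insert kmin2 R \<in> red_sets (a # r) c"
    unfolding red_sets_Cons_iff using k by (intro conjI exI[of _ hi]) auto
qed

lemma red_sets_one:
  assumes p: "composition (a # r)" and c1: "c kmin = 1"
  shows "red_sets (a # r) c = red_sets (dec_head (a # r)) c_del \<union> insert kmin2 ` red_sets (a # r) c_del"
proof
  show "red_sets (a # r) c \<subseteq> red_sets (dec_head (a # r)) c_del \<union> insert kmin2 ` red_sets (a # r) c_del"
  proof
    fix R assume R: "R \<in> red_sets (a # r) c"
    show "R \<in> red_sets (dec_head (a # r)) c_del \<union> insert kmin2 ` red_sets (a # r) c_del"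
    proof (cases "supp c_del \<noteq> {} \<and> kmin2 \<in> R")
      case True
      then have "R = insert kmin2 (R - {kmin2})" by blast
      with red_sets_one_remove_kmin2[OF p c1 R] True show ?thesis by blast
    next
      case False
      with red_sets_one_dec_head[OF p c1 R] show ?thesis by blast
    qed
  qed
  show "red_sets (dec_head (a # r)) c_del \<union> insert kmin2 ` red_sets (a # r) c_del \<subseteq> red_sets (a # r) c"
    using red_sets_one_of_dec_head[OF p c1] red_sets_one_insert_kmin2(1)[OF p c1] by blast
qed

lemma card_red_sets_one:
  assumes p: "composition (a # r)" and c1: "c kmin = 1"
  shows "card (red_sets (a # r) c) = card (red_sets (dec_head (a # r)) c_del) + card (red_sets (a # r) c_del)"
proof -
  have inj: "inj_on (insert kmin2) (red_sets (a # r) c_del)"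
    using red_sets_one_insert_kmin2(3)[OF p c1] by (intro inj_onI) (metis insert_ident)
  have disj: "red_sets (dec_head (a # r)) c_del \<inter> insert kmin2 ` red_sets (a # r) c_del = {}"
    using red_sets_one_insert_kmin2(2)[OF p c1] kmin2_not_red by blast
  have fin: "finite (red_sets \<alpha> c_del)" for \<alpha>
    by (rule finite_red_sets[OF finite_supp_c_del])
  show ?thesis
    unfolding red_sets_one[OF p c1]
    using card_Un_disjoint[OF fin finite_imageI[OF fin] disj] card_image[OF inj] by simp
qed

end

lemma card_Atilde_wt_eq_card_red_sets_base:
  assumes p: "composition \<alpha>" and c0: "c 0 = 0" and triv: "supp c = {} \<or> \<alpha> = []"
  shows "card (Atilde_wt \<alpha> c) = card (red_sets \<alpha> c)"
proof (cases "supp c = {}")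
  case True
  then have "c = (\<lambda>_. 0)" by (auto simp: supp_def fun_eq_iff)
  with True p c0 show ?thesis
    by (cases \<alpha>) (simp_all add: Atilde_wt_Nil red_sets_Nil Atilde_wt_zero red_sets_zero)
next
  case False
  with triv c0 show ?thesis by (auto simp: Atilde_wt_Nil red_sets_Nil supp_def)
qed

theorem card_Atilde_wt_eq_card_red_sets:
  assumes "composition \<alpha>" and "finite (supp c)" and "c 0 = 0"
  shows "card (Atilde_wt \<alpha> c) = card (red_sets \<alpha> c)"
  using assms
proof (induction "sum c (supp c)" arbitrary: \<alpha> c rule: less_induct)
  case less
  note p = less.prems(1) and c0 = less.prems(3)
  show ?case
  proof (cases "supp c = {} \<or> \<alpha> = []")
    case True
    with p c0 show ?thesis by (rule card_Atilde_wt_eq_card_red_sets_base)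
  next
    case False
    then obtain a r where \<alpha>: "\<alpha> = a # r" and ne: "supp c \<noteq> {}" by (cases \<alpha>) auto
    interpret min_support c using c0 less.prems(2) ne by unfold_locales
    from p \<alpha> have p': "composition (a # r)" by simp
    consider "c kmin = 1" | "2 \<le> c kmin" using c_kmin by linarith
    then show ?thesis
    proof cases
      case 1
      then have "sum c_del (supp c_del) < sum c (supp c)" by (rule sum_supp_c_del_less)
      note IH = less.hyps[OF this _ finite_supp_c_del c_del_0]
      show ?thesis
        using \<alpha> IH[OF p'] IH[OF composition_dec_head[OF p']]
        by (simp add: card_Atilde_wt_one[OF p' 1] card_red_sets_one[OF p' 1])
    next
      case 2
      have "composition ((a - 1) # r)" if "a \<noteq> 1" using p' that by (auto simp: composition_def)
      with less.hyps[OF sum_supp_c_dec_less _ finite_supp_c_dec c_dec_0] \<alpha> show ?thesis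
        by (simp add: card_Atilde_wt_ge2[OF p' 2] card_red_sets_ge2[OF p' 2])
    qed
  qed
qed

section \<open>Glides of \<open>0\<^sup>m a\<close>\<close>

lemma boundaries_mono:
  assumes "\<forall>j<l. (i :: nat \<Rightarrow> nat) j < i (Suc j)" and "j \<le> j'" and "j' \<le> l"
  shows "i j \<le> i j'"
  using assms(2,3)
proof (induction j' arbitrary: j)
  case 0 then show ?case by simp
next
  case (Suc j')
  show ?case
  proof (cases "j = Suc j'")
    case False
    with Suc have "i j \<le> i j'" by simp
    also have "i j' < i (Suc j')" using assms(1) Suc.prems by simp
    finally show ?thesis by simp
  qed simp
qed

lemma blocks_of_boundaries:
  assumes "i 0 = lo" and "\<forall>j<length \<alpha>. i j < i (Suc j)" and "\<forall>k>i (length \<alpha>). c k = 0"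
    and "\<forall>j<length \<alpha>. block_ok c R (\<alpha> ! j) (i j) (i (Suc j))"
  shows "blocks c R lo \<alpha>"
  using assms
proof (induction \<alpha> arbitrary: lo i)
  case Nil then show ?case by simp
next
  case (Cons v \<alpha>)
  have "blocks c R (i 1) \<alpha>"
    using Cons.prems by (intro Cons.IH[of "i \<circ> Suc"]) auto
  with Cons.prems show ?case by (auto intro!: exI[of _ "i 1"])
qed

lemma boundaries_of_blocks:
  assumes "blocks c R lo \<alpha>" and "composition \<alpha>" and cM: "\<forall>k>M. c k = 0" and R: "R \<subseteq> supp c"
    and "lo \<le> M"
  obtains i where "i 0 = lo" "\<forall>j<length \<alpha>. i j < i (Suc j)" "i (length \<alpha>) \<le> M"
    "\<forall>k>i (length \<alpha>). c k = 0" "\<forall>j<length \<alpha>. block_ok c R (\<alpha> ! j) (i j) (i (Suc j))"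
  using assms(1,2,5)
proof (induction \<alpha> arbitrary: lo thesis)
  case Nil
  then show ?case by (auto intro: Nil.prems(1)[of "\<lambda>_. lo"])
next
  case (Cons v \<alpha>)
  then obtain hi where hi: "lo < hi" "block_ok c R v lo hi" "blocks c R hi \<alpha>" by auto
  have v: "0 < v" and p: "composition \<alpha>" using Cons.prems(3) by (auto simp: composition_def)
  define hi' where "hi' = min hi M"
  have z: "c x = 0" if "x \<in> {hi'<..hi}" for x using that cM by (auto simp: hi'_def)
  obtain x where "x \<in> {lo<..hi}" "c x \<noteq> 0" using block_ok_nonzero[OF hi(2) v] by blast
  moreover from this cM have "x \<le> M" by (meson not_le)
  ultimately have lo: "lo < hi'" by (auto simp: hi'_def)
  have b: "block_ok c R v lo hi'"
    using hi(2) block_ok_drop_zeros_right[of lo hi' hi c R v] z R \<open>lo < hi'\<close> by (simp add: hi'_def)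
  have "blocks c R hi' \<alpha>"
    using hi(3) blocks_skip_zeros[OF p, of hi' hi c R] z R by (simp add: hi'_def)
  moreover have "hi' \<le> M" by (simp add: hi'_def)
  ultimately obtain i where "i 0 = hi'" "\<forall>j<length \<alpha>. i j < i (Suc j)" "i (length \<alpha>) \<le> M"
    "\<forall>k>i (length \<alpha>). c k = 0" "\<forall>j<length \<alpha>. block_ok c R (\<alpha> ! j) (i j) (i (Suc j))"
    using Cons.IH[OF _ _ p] by blast
  with lo b show ?case
    by (intro Cons.prems(1)[of "\<lambda>j. case j of 0 \<Rightarrow> lo | Suc j' \<Rightarrow> i j'"])
      (auto simp: nth_Cons less_Suc_eq_0_disj split: nat.split)
qed

definition glide_of :: "(nat \<Rightarrow> nat) \<Rightarrow> nat \<Rightarrow> nat set \<Rightarrow> (nat \<times> bool) list" where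
  "glide_of c L R = map (\<lambda>k. (c (Suc k), Suc k \<in> R)) [0..<L]"

lemma length_glide_of [simp]: "length (glide_of c L R) = L"
  by (simp add: glide_of_def)

lemma glide_of_entry:
  "1 \<le> k \<Longrightarrow> k \<le> L \<Longrightarrow> bval (glide_of c L R) k = c k \<and> (bred (glide_of c L R) k \<longleftrightarrow> k \<in> R)"
  by (cases k) (auto simp: glide_of_def bval_def bred_def)

lemma is_wkomp_glide_of: "R \<subseteq> supp c \<Longrightarrow> is_wkomp (glide_of c L R)"
  by (auto simp: is_wkomp_def glide_of_def supp_def)

lemma flat_replicate_zeros: "flat (replicate m 0 @ a) = flat a"
  by (simp add: flat_def)

lemma length_nzpos: "length (nzpos a) = length (flat a)"
proof -
  have "map (\<lambda>k. a ! (k - 1)) [1..<length a + 1] = a"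
    by (rule nth_equalityI) (simp_all del: upt_Suc)
  then have "length (flat a) = length (filter (\<lambda>x. x \<noteq> 0) (map (\<lambda>k. a ! (k - 1)) [1..<length a + 1]))"
    by (simp add: flat_def)
  also have "\<dots> = length (nzpos a)" by (simp add: nzpos_def filter_map o_def)
  finally show ?thesis ..
qed

lemma nzpos_replicate_zeros_bounds:
  assumes "j < length (flat a)"
  shows "m < nzpos (replicate m 0 @ a) ! j" and "nzpos (replicate m 0 @ a) ! j \<le> m + length a"
proof -
  let ?a = "replicate m 0 @ a" and ?n = "nzpos (replicate m 0 @ a) ! j"
  have "?n \<in> set (nzpos ?a)"
    using assms length_nzpos[of ?a] by (simp add: flat_replicate_zeros)
  then have n: "1 \<le> ?n" "?n \<le> length ?a" "?a ! (?n - 1) \<noteq> 0"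
    unfolding nzpos_def by (simp_all del: upt_Suc)
  then show "?n \<le> m + length a" by simp
  show "m < ?n"
  proof (rule ccontr)
    assume "\<not> m < ?n"
    with n have "?n - 1 < m" by simp
    then have "?a ! (?n - 1) = 0" by (simp add: nth_append)
    with n show False by simp
  qed
qed

lemma glide_block_iff_block_ok:
  assumes e: "\<And>k. k \<in> {lo<..hi} \<Longrightarrow> bval b k = c k \<and> (bred b k \<longleftrightarrow> k \<in> R)"
    and R: "R \<subseteq> supp c"
  shows "((\<Sum>k\<in>{lo<..hi}. bval b k) = v + card {k\<in>{lo<..hi}. bval b k \<noteq> 0 \<and> bred b k} \<and>
          (\<forall>k\<in>{lo<..hi}. bval b k \<noteq> 0 \<and> (\<forall>k'\<in>{lo<..<k}. bval b k' = 0) \<longrightarrow> \<not> bred b k))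
       \<longleftrightarrow> block_ok c R v lo hi"
proof -
  have "(\<Sum>k\<in>{lo<..hi}. bval b k) = sum c {lo<..hi}" using e by (intro sum.cong) auto
  moreover have "{k\<in>{lo<..hi}. bval b k \<noteq> 0 \<and> bred b k} = {lo<..hi} \<inter> R"
    using e R by (auto simp: supp_def)
  moreover have "first_black (\<lambda>k. bval b k) {k. bred b k} lo hi \<longleftrightarrow> first_black c R lo hi"
    using e by (intro first_black_cong) auto
  ultimately show ?thesis by (simp add: block_ok_def first_black_def)
qed

lemma glide_of_zero_tail_iff:
  assumes "\<forall>k>M. c k = 0" and "M \<le> L"
  shows "(\<forall>k. j < k \<and> k \<le> L \<longrightarrow> bval (glide_of c L R) k = 0) \<longleftrightarrow> (\<forall>k>j. c k = 0)"
proof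
  assume z: "\<forall>k. j < k \<and> k \<le> L \<longrightarrow> bval (glide_of c L R) k = 0"
  show "\<forall>k>j. c k = 0"
  proof (intro allI impI)
    fix k assume k: "j < k"
    show "c k = 0"
    proof (cases "k \<le> L")
      case True
      with k z glide_of_entry[of k L c R] show ?thesis by simp
    qed (use k assms in simp)
  qed
next
  assume "\<forall>k>j. c k = 0"
  then show "\<forall>k. j < k \<and> k \<le> L \<longrightarrow> bval (glide_of c L R) k = 0"
    using glide_of_entry[of _ L c R] by simp
qed

lemma ball_atLeastAtMost_Suc: "(\<forall>j\<in>{1..l}. P j) \<longleftrightarrow> (\<forall>j<l. P (Suc j))"
proof
  assume H: "\<forall>j<l. P (Suc j)"
  show "\<forall>j\<in>{1..l}. P j"
  proof
    fix j :: nat assume "j \<in> {1..l}"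
    then obtain j' where "j = Suc j'" "j' < l" by (cases j) auto
    with H show "P j" by simp
  qed
qed auto

lemma is_glide_glide_of_iff_boundaries:
  assumes cM: "\<forall>k>M. c k = 0" and mM: "M \<le> m" and R: "R \<subseteq> supp c"
  shows "is_glide (replicate m 0 @ a) (glide_of c (m + length a) R) \<longleftrightarrow>
    (\<exists>i. i 0 = 0 \<and> (\<forall>j<length (flat a). i j < i (Suc j)) \<and>
      (\<forall>j\<in>{1..length (flat a)}. i j \<le> nzpos (replicate m 0 @ a) ! (j - 1)) \<and>
      (\<forall>k>i (length (flat a)). c k = 0) \<and>
      (\<forall>j<length (flat a). block_ok c R (flat a ! j) (i j) (i (Suc j))))"
proof -
  let ?a = "replicate m 0 @ a" and ?L = "m + length a" and ?l = "length (flat a)"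
  let ?b = "glide_of c ?L R"
  define G where "G v lo hi \<longleftrightarrow>
    (\<Sum>k\<in>{lo<..hi}. bval ?b k) = v + card {k\<in>{lo<..hi}. bval ?b k \<noteq> 0 \<and> bred ?b k} \<and>
    (\<forall>k\<in>{lo<..hi}. bval ?b k \<noteq> 0 \<and> (\<forall>k'\<in>{lo<..<k}. bval ?b k' = 0) \<longrightarrow> \<not> bred ?b k)"
    for v lo hi
  define bounded where "bounded i \<longleftrightarrow> i 0 = 0 \<and> (\<forall>j\<in>{1..?l}. i j \<le> nzpos ?a ! (j - 1))" for i
  have glide: "is_glide ?a ?b \<longleftrightarrow> (\<exists>i. bounded i \<and> (\<forall>j<?l. i j < i (Suc j)) \<and>
      (\<forall>k. i ?l < k \<and> k \<le> ?L \<longrightarrow> bval ?b k = 0) \<and>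
      (\<forall>j\<in>{1..?l}. G (flat a ! (j - 1)) (i (j - 1)) (i j)))"
    unfolding is_glide_def Let_def flat_replicate_zeros G_def bounded_def
    using is_wkomp_glide_of[OF R] by auto
  have le_L: "i j \<le> ?L" if "bounded i" "j \<le> ?l" for i j
  proof (cases j)
    case (Suc j')
    with that(2) have "Suc j' \<in> {1..?l}" by simp
    with that(1) Suc have "i j \<le> nzpos ?a ! j'" unfolding bounded_def by fastforce
    with nzpos_replicate_zeros_bounds(2)[of j' a m] Suc that(2) show ?thesis by simp
  qed (use that in \<open>simp add: bounded_def\<close>)
  have blocks: "(\<forall>j\<in>{1..?l}. G (flat a ! (j - 1)) (i (j - 1)) (i j)) \<longleftrightarrow>
      (\<forall>j<?l. block_ok c R (flat a ! j) (i j) (i (Suc j)))" if "bounded i" for i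
  proof -
    have GB: "G (flat a ! j) (i j) (i (Suc j)) \<longleftrightarrow> block_ok c R (flat a ! j) (i j) (i (Suc j))"
      if "j < ?l" for j
      unfolding G_def using le_L[OF \<open>bounded i\<close>, of "Suc j"] that glide_of_entry[of _ ?L c R] R
      by (intro glide_block_iff_block_ok) auto
    show ?thesis unfolding ball_atLeastAtMost_Suc using GB by simp
  qed
  have "(bounded i \<and> (\<forall>j<?l. i j < i (Suc j)) \<and> (\<forall>k. i ?l < k \<and> k \<le> ?L \<longrightarrow> bval ?b k = 0) \<and>
      (\<forall>j\<in>{1..?l}. G (flat a ! (j - 1)) (i (j - 1)) (i j))) \<longleftrightarrow>
    (i 0 = 0 \<and> (\<forall>j<?l. i j < i (Suc j)) \<and> (\<forall>j\<in>{1..?l}. i j \<le> nzpos ?a ! (j - 1)) \<and>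
      (\<forall>k>i ?l. c k = 0) \<and> (\<forall>j<?l. block_ok c R (flat a ! j) (i j) (i (Suc j))))" for i
  proof (cases "bounded i")
    case True
    then show ?thesis
      using glide_of_zero_tail_iff[OF cM, of ?L "i ?l" R] mM
      by (simp only: blocks[OF True]) (simp add: bounded_def)
  next
    case False
    then show ?thesis unfolding bounded_def by blast
  qed
  then show ?thesis unfolding glide by (rule ex_cong1)
qed

lemma is_glide_glide_of_iff:
  assumes cM: "\<forall>k>M. c k = 0" and mM: "M \<le> m" and R: "R \<subseteq> supp c"
  shows "is_glide (replicate m 0 @ a) (glide_of c (m + length a) R) \<longleftrightarrow> blocks c R 0 (flat a)"
  unfolding is_glide_glide_of_iff_boundaries[OF assms]
proof
  assume "\<exists>i. i 0 = 0 \<and> (\<forall>j<length (flat a). i j < i (Suc j)) \<and>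
      (\<forall>j\<in>{1..length (flat a)}. i j \<le> nzpos (replicate m 0 @ a) ! (j - 1)) \<and>
      (\<forall>k>i (length (flat a)). c k = 0) \<and>
      (\<forall>j<length (flat a). block_ok c R (flat a ! j) (i j) (i (Suc j)))"
  then show "blocks c R 0 (flat a)" by (metis blocks_of_boundaries)
next
  assume "blocks c R 0 (flat a)"
  then obtain i where i0: "i 0 = 0" and st: "\<forall>j<length (flat a). i j < i (Suc j)"
    and iM: "i (length (flat a)) \<le> M" and tail: "\<forall>k>i (length (flat a)). c k = 0"
    and bl: "\<forall>j<length (flat a). block_ok c R (flat a ! j) (i j) (i (Suc j))"
    using boundaries_of_blocks[OF _ composition_flat cM R] by blast
  have "i j \<le> nzpos (replicate m 0 @ a) ! (j - 1)" if "j \<in> {1..length (flat a)}" for j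
  proof -
    have "i j \<le> M" using boundaries_mono[OF st, of j "length (flat a)"] that iM by auto
    moreover have "j - 1 < length (flat a)" using that by auto
    then have "M < nzpos (replicate m 0 @ a) ! (j - 1)"
      using nzpos_replicate_zeros_bounds(1)[of "j - 1" a m] mM by simp
    ultimately show ?thesis by simp
  qed
  with i0 st tail bl show "\<exists>i. i 0 = 0 \<and> (\<forall>j<length (flat a). i j < i (Suc j)) \<and>
      (\<forall>j\<in>{1..length (flat a)}. i j \<le> nzpos (replicate m 0 @ a) ! (j - 1)) \<and>
      (\<forall>k>i (length (flat a)). c k = 0) \<and>
      (\<forall>j<length (flat a). block_ok c R (flat a ! j) (i j) (i (Suc j)))" by blast
qed

lemma glide_with_monomial_eq_glide_of:
  assumes g: "is_glide a' b" and mono: "mono_of b = c"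
  defines "R \<equiv> {k. 1 \<le> k \<and> k \<le> length a' \<and> bred b k}"
  shows "b = glide_of c (length a') R" and "R \<subseteq> supp c"
proof -
  have len: "length b = length a'" and wk: "is_wkomp b" using g by (simp_all add: is_glide_def)
  have val: "fst (b ! k) = c (Suc k)" if "k < length b" for k
    using fun_cong[OF mono, of "Suc k"] that by (simp add: mono_of_def bval_def)
  show "b = glide_of c (length a') R"
    using len val by (intro nth_equalityI) (auto simp: glide_of_def R_def bred_def prod_eq_iff)
  show "R \<subseteq> supp c"
  proof
    fix k assume "k \<in> R"
    then have k: "k - 1 < length b" "snd (b ! (k - 1))" "1 \<le> k" using len by (auto simp: R_def bred_def)
    with wk have "fst (b ! (k - 1)) \<noteq> 0" by (auto simp: is_wkomp_def)
    with val[OF k(1)] k(3) show "k \<in> supp c" by (simp add: supp_def)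
  qed
qed

lemma glides_with_monomial:
  assumes c0: "c 0 = 0" and cM: "\<forall>k>M. c k = 0" and mM: "M \<le> m"
  shows "{b. is_glide (replicate m 0 @ a) b \<and> mono_of b = c} =
    glide_of c (m + length a) ` red_sets (flat a) c"
proof
  show "{b. is_glide (replicate m 0 @ a) b \<and> mono_of b = c} \<subseteq> glide_of c (m + length a) ` red_sets (flat a) c"
  proof
    fix b assume "b \<in> {b. is_glide (replicate m 0 @ a) b \<and> mono_of b = c}"
    then have g: "is_glide (replicate m 0 @ a) b" and mono: "mono_of b = c" by auto
    define R where "R = {k. 1 \<le> k \<and> k \<le> length (replicate m 0 @ a) \<and> bred b k}"
    have b: "b = glide_of c (m + length a) R" and Rs: "R \<subseteq> supp c"
      using glide_with_monomial_eq_glide_of[OF g mono] by (simp_all add: R_def)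
    have "blocks c R 0 (flat a)" using g is_glide_glide_of_iff[OF cM mM Rs] b by simp
    with Rs b show "b \<in> glide_of c (m + length a) ` red_sets (flat a) c"
      by (auto simp: red_sets_def)
  qed
  show "glide_of c (m + length a) ` red_sets (flat a) c \<subseteq> {b. is_glide (replicate m 0 @ a) b \<and> mono_of b = c}"
  proof clarify
    fix R assume "R \<in> red_sets (flat a) c"
    then have R: "R \<subseteq> supp c" "blocks c R 0 (flat a)" by (auto simp: red_sets_def)
    have "mono_of (glide_of c (m + length a) R) k = c k" for k
      using glide_of_entry[of k "m + length a" c R] c0 cM mM
      by (cases "1 \<le> k \<and> k \<le> m + length a") (auto simp: mono_of_def not_le)
    with R cM mM show "is_glide (replicate m 0 @ a) (glide_of c (m + length a) R) \<and>
        mono_of (glide_of c (m + length a) R) = c"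
      using is_glide_glide_of_iff by auto
  qed
qed

lemma inj_on_glide_of:
  assumes "\<And>k. c k \<noteq> 0 \<Longrightarrow> 1 \<le> k \<and> k \<le> L"
  shows "inj_on (glide_of c L) (Pow (supp c))"
proof (rule inj_onI)
  fix R R' assume "R \<in> Pow (supp c)" "R' \<in> Pow (supp c)" and eq: "glide_of c L R = glide_of c L R'"
  have "k \<in> R \<longleftrightarrow> k \<in> R'" if "c k \<noteq> 0" for k
  proof -
    have "1 \<le> k" "k \<le> L" using assms[OF that] by simp_all
    from glide_of_entry[OF this, of c R] glide_of_entry[OF this, of c R'] eq show ?thesis by simp
  qed
  with \<open>R \<in> Pow (supp c)\<close> \<open>R' \<in> Pow (supp c)\<close> show "R = R'" by (auto simp: supp_def)
qed

lemma glide_coeff_eq_card_red_sets: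
  assumes c0: "c 0 = 0" and cM: "\<forall>k>M. c k = 0" and mM: "M \<le> m"
  shows "glide_coeff (1::nat) (replicate m 0 @ a) c = card (red_sets (flat a) c)"
proof -
  have "inj_on (glide_of c (m + length a)) (red_sets (flat a) c)"
  proof (rule inj_on_subset[OF inj_on_glide_of])
    show "1 \<le> k \<and> k \<le> m + length a" if "c k \<noteq> 0" for k
    proof -
      have "k \<noteq> 0" using that c0 by (cases "k = 0") auto
      moreover have "k \<le> M" using that cM by (meson not_le)
      ultimately show ?thesis using mM by simp
    qed
    show "red_sets (flat a) c \<subseteq> Pow (supp c)" by (auto simp: red_sets_def)
  qed
  then show ?thesis
    by (simp add: glide_coeff_def glides_with_monomial[OF assms] card_image)
qed

lemma glide_coeff_eq_0: "c 0 \<noteq> 0 \<Longrightarrow> glide_coeff \<beta> a c = 0"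
proof -
  assume "c 0 \<noteq> 0"
  moreover have "mono_of b 0 = 0" for b by (simp add: mono_of_def)
  ultimately have "{b. is_glide a b \<and> mono_of b = c} = {}" by auto
  then show ?thesis unfolding glide_coeff_def by (simp only: sum.empty)
qed

lemma Ltilde_coeff_eq_0: "c 0 \<noteq> 0 \<Longrightarrow> Ltilde_coeff \<alpha> c = 0"
proof -
  assume c0: "c 0 \<noteq> 0"
  have "Atilde_wt \<alpha> c = {}"
  proof (rule equals0I)
    fix \<sigma> assume "\<sigma> \<in> Atilde_wt \<alpha> c"
    moreover obtain S where "S \<in> set \<sigma>" "0 \<in> S"
      using c0 wt_pos_iff[of \<sigma> 0] \<open>\<sigma> \<in> Atilde_wt \<alpha> c\<close> by (auto simp: Atilde_wt_def)
    ultimately show False using Atilde_pos_finite by (auto simp: Atilde_wt_def pos_finite_def)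
  qed
  then show ?thesis by (simp add: Ltilde_coeff_def Atilde_wt_def[symmetric])
qed

theorem mainTheorem6:
  fixes a :: "nat list" and c :: "nat \<Rightarrow> nat"
  assumes "\<exists>x\<in>set a. x \<noteq> 0"
    and "finite {k. c k \<noteq> 0}"
  shows "\<exists>M. \<forall>m\<ge>M. glide_coeff (1::nat) (replicate m 0 @ a) c = Ltilde_coeff (flat a) c"
proof (cases "c 0 = 0")
  case False
  then show ?thesis by (simp add: glide_coeff_eq_0 Ltilde_coeff_eq_0)
next
  case True
  have fin: "finite (supp c)" using assms(2) by (simp add: supp_def)
  then obtain M where "\<forall>k\<in>supp c. k \<le> M" by (auto simp: finite_nat_set_iff_bounded_le)
  then have cM: "\<forall>k>M. c k = 0" by (auto simp: supp_def)
  have "glide_coeff (1::nat) (replicate m 0 @ a) c = Ltilde_coeff (flat a) c" if "M \<le> m" for m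
    using glide_coeff_eq_card_red_sets[OF True cM that] card_Atilde_wt_eq_card_red_sets[OF composition_flat fin True]
    by (simp add: Ltilde_coeff_def Atilde_wt_def)
  then show ?thesis by blast
qed

end
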